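(* Let $n\ge3$. Then the big height of $I(L_n^2)\subseteq\Bbbk[x_1,\dots,x_n]$ equals $n-\left\lceil\frac n5\right\rceil$.
   Context: $L_n^2$ is the graph on $\{1,\dots,n\}$ with edges $\{i,i+1\}$ ($1\le i\le n-1$) and $\{i,i+2\}$ ($1\le i\le n-2$). $I(G)=\langle x_ix_j:\{i,j\}\in E(G)\rangle$, $\Bbbk$ a field. The big height of an ideal is the maximum height of its minimal prime ideals. *)

theory Defs
  imports "HOL-Library.Poly_Mapping" "HOL-Library.Extended_Nat" "HOL-Algebra.Ideal"
begin

type_synonym 'a mpoly = "(nat \<Rightarrow>\<^sub>0 nat) \<Rightarrow>\<^sub>0 'a"

definition poly_ring :: "nat \<Rightarrow> ('a::field) mpoly ring" where
  "poly_ring n = \<lparr> carrier = {p. \<forall>m \<in> Poly_Mapping.keys p. Poly_Mapping.keys m \<subseteq> {1..n}},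
                   monoid.mult = (*), one = 1, zero = 0, add = (+) \<rparr>"

definition var :: "nat \<Rightarrow> ('a::field) mpoly" where
  "var i = Poly_Mapping.single (Poly_Mapping.single i 1) 1"

definition L2_edges :: "nat \<Rightarrow> nat set set" where
  "L2_edges n = {{i, i+1} | i. 1 \<le> i \<and> i \<le> n - 1} \<union> {{i, i+2} | i. 1 \<le> i \<and> i + 2 \<le> n}"

definition edge_ideal :: "nat \<Rightarrow> nat set set \<Rightarrow> ('a::field) mpoly set" where
  "edge_ideal n E = genideal (poly_ring n) {var i * var j | i j. {i, j} \<in> E}"

definition height :: "('a, 'b) ring_scheme \<Rightarrow> 'a set \<Rightarrow> enat" where
  "height R P = (SUP k \<in> {k. \<exists>Q. (\<forall>i\<le>k. primeideal (Q i) R) \<and> (\<forall>i<k. Q i \<subset> Q (Suc i)) \<and> Q k = P}. enat k)"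

definition minimal_primes :: "('a, 'b) ring_scheme \<Rightarrow> 'a set \<Rightarrow> 'a set set" where
  "minimal_primes R I = {P. primeideal P R \<and> I \<subseteq> P \<and>
      (\<forall>Q. primeideal Q R \<and> I \<subseteq> Q \<and> Q \<subseteq> P \<longrightarrow> Q = P)}"

definition big_height :: "('a, 'b) ring_scheme \<Rightarrow> 'a set \<Rightarrow> enat" where
  "big_height R I = (SUP P \<in> minimal_primes R I. height R P)"

end

theory Submission
  imports Defs
begin

text \<open>The minimal primes of an edge ideal \<open>I(G)\<close> are the ideals \<open>(x\<^sub>i : i \<in> C)\<close> for the minimal
  vertex covers \<open>C\<close> of \<open>G\<close>, and \<open>(x\<^sub>i : i \<in> C)\<close> has height \<open>|C|\<close>: the chain of ideals generated
  by growing subsets of \<open>C\<close> gives \<open>\<ge>\<close>; for \<open>\<le>\<close>, the largest number of variables algebraically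
  independent modulo a prime drops strictly along a strict inclusion of primes, and is
  \<open>\<ge> n - |C|\<close> for \<open>(x\<^sub>i : i \<in> C)\<close>. So the big height is the largest size of a minimal vertex cover.
  For \<open>L\<^sub>n\<^sup>2\<close>, every vertex of a minimal cover has a neighbour outside it, so the windows
  \<open>{u - 2..u + 2}\<close> around the vertices \<open>u\<close> of the complement exhaust \<open>{1..n}\<close> and the complement
  has at least \<open>\<lceil>n/5\<rceil>\<close> elements; the independent set of vertices \<open>\<equiv> 3 (mod 5)\<close>, extended by \<open>n\<close> when
  \<open>n \<equiv> 1, 2 (mod 5)\<close>, has exactly that size and its complement is a minimal cover.\<close>

section \<open>Polynomials in a set of variables\<close>

definition polys_in :: "nat set \<Rightarrow> 'a::zero mpoly set" where
  "polys_in S = {p. \<forall>m\<in>Poly_Mapping.keys p. Poly_Mapping.keys m \<subseteq> S}"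

lemma keys_add_nat: "Poly_Mapping.keys ((a::'b \<Rightarrow>\<^sub>0 nat) + b) = Poly_Mapping.keys a \<union> Poly_Mapping.keys b"
  by (auto simp: in_keys_iff lookup_add)

lemma polys_in_0 [simp]: "0 \<in> polys_in S"
  by (simp add: polys_in_def)

lemma polys_in_1 [simp]: "(1::'a::zero_neq_one mpoly) \<in> polys_in S"
  by (simp add: polys_in_def)

lemma polys_in_add [simp, intro]: "p \<in> polys_in S \<Longrightarrow> q \<in> polys_in S \<Longrightarrow> p + q \<in> polys_in S"
  using keys_add[of p q] by (auto simp: polys_in_def)

lemma polys_in_uminus [simp]: "- (p::'a::ab_group_add mpoly) \<in> polys_in S \<longleftrightarrow> p \<in> polys_in S"
  by (simp add: polys_in_def)

lemma polys_in_mult [simp, intro]: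
  assumes "(p::'a::comm_semiring_1 mpoly) \<in> polys_in S" "q \<in> polys_in S"
  shows "p * q \<in> polys_in S"
proof -
  have "Poly_Mapping.keys m \<subseteq> S" if m: "m \<in> Poly_Mapping.keys (p * q)" for m
  proof -
    obtain a b where "m = a + b" "a \<in> Poly_Mapping.keys p" "b \<in> Poly_Mapping.keys q"
      using keys_mult[of p q] m by blast
    then show ?thesis using assms by (auto simp: polys_in_def keys_add_nat)
  qed
  then show ?thesis by (simp add: polys_in_def)
qed

lemma polys_in_sum [intro]:
  "(\<And>i. i \<in> A \<Longrightarrow> (f i::'a::comm_monoid_add mpoly) \<in> polys_in S) \<Longrightarrow> sum f A \<in> polys_in S"
  by (induction A rule: infinite_finite_induct) auto

lemma polys_in_prod [intro]:
  "(\<And>i. i \<in> A \<Longrightarrow> (f i::'a::comm_semiring_1 mpoly) \<in> polys_in S) \<Longrightarrow> prod f A \<in> polys_in S"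
  by (induction A rule: infinite_finite_induct) auto

lemma polys_in_power [intro]: "(p::'a::comm_semiring_1 mpoly) \<in> polys_in S \<Longrightarrow> p ^ k \<in> polys_in S"
  by (induction k) auto

lemma polys_in_mono: "S \<subseteq> T \<Longrightarrow> p \<in> polys_in S \<Longrightarrow> p \<in> polys_in T"
  by (auto simp: polys_in_def)

lemma polys_in_single: "Poly_Mapping.keys m \<subseteq> S \<Longrightarrow> Poly_Mapping.single m a \<in> polys_in S"
  by (simp add: polys_in_def)

lemma polys_in_const: "Poly_Mapping.single 0 a \<in> polys_in S"
  by (simp add: polys_in_single)

lemma mpoly_monomial_expansion:
  "(p::'a::comm_monoid_add mpoly) =
     (\<Sum>m\<in>Poly_Mapping.keys p. Poly_Mapping.single m (Poly_Mapping.lookup p m))"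
proof (rule poly_mapping_eqI)
  fix k
  have "Poly_Mapping.lookup (\<Sum>m\<in>Poly_Mapping.keys p. Poly_Mapping.single m (Poly_Mapping.lookup p m)) k
      = (\<Sum>m\<in>Poly_Mapping.keys p. if m = k then Poly_Mapping.lookup p m else 0)"
    by (simp add: Poly_Mapping.lookup_sum lookup_single when_def)
  also have "\<dots> = Poly_Mapping.lookup p k"
    by (simp add: in_keys_iff)
  finally show "Poly_Mapping.lookup p k =
      Poly_Mapping.lookup (\<Sum>m\<in>Poly_Mapping.keys p. Poly_Mapping.single m (Poly_Mapping.lookup p m)) k"
    by simp
qed

definition monomial :: "(nat \<Rightarrow>\<^sub>0 nat) \<Rightarrow> 'a::field mpoly" where
  "monomial m = Poly_Mapping.single m 1"

lemma monomial_add: "monomial (a + b) = (monomial a * monomial b :: 'a::field mpoly)"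
  by (simp add: monomial_def mult_single)

lemma monomial_0: "monomial 0 = (1::'a::field mpoly)"
  by (simp add: monomial_def)

lemma monomial_single: "monomial (Poly_Mapping.single i k) = (var i :: 'a::field mpoly) ^ k"
proof (induction k)
  case (Suc k)
  have "monomial (Poly_Mapping.single i (Suc k)) = (var i :: 'a mpoly) * monomial (Poly_Mapping.single i k)"
    by (simp add: var_def monomial_def mult_single flip: single_add)
  then show ?case by (simp add: Suc.IH)
qed (simp add: monomial_def)

lemma monomial_in_polys_in: "Poly_Mapping.keys m \<subseteq> S \<Longrightarrow> (monomial m :: 'a::field mpoly) \<in> polys_in S"
  unfolding monomial_def by (rule polys_in_single)

lemma var_in_polys_in: "i \<in> S \<Longrightarrow> (var i :: 'a::field mpoly) \<in> polys_in S"
  unfolding var_def by (rule polys_in_single) simp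

lemma single_monomial_split:
  "Poly_Mapping.single m a =
     Poly_Mapping.single (Poly_Mapping.update j 0 m) a * (var j :: 'a::field mpoly) ^ Poly_Mapping.lookup m j"
proof -
  have "m = Poly_Mapping.update j 0 m + Poly_Mapping.single j (Poly_Mapping.lookup m j)"
    by (intro poly_mapping_eqI) (auto simp: lookup_add lookup_update lookup_single when_def)
  then show ?thesis
    by (metis monomial_single monomial_def mult_single mult.right_neutral)
qed

lemma carrier_poly_ring: "carrier (poly_ring n) = polys_in {1..n}"
  by (auto simp: poly_ring_def polys_in_def)

lemma poly_ring_simps [simp]:
  "mult (poly_ring n) = (*)" "add (poly_ring n) = (+)"
  "one (poly_ring n) = 1" "zero (poly_ring n) = 0"
  by (simp_all add: poly_ring_def)

lemma cring_poly_ring: "cring (poly_ring n :: 'a::field mpoly ring)"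
proof (rule cringI)
  have "\<exists>y\<in>polys_in {1..n}. y + x = 0" if "x \<in> polys_in {1..n}" for x :: "'a mpoly"
    using that by (intro bexI[of _ "- x"]) simp_all
  then show "abelian_group (poly_ring n :: 'a mpoly ring)"
    by (intro abelian_groupI) (simp_all add: carrier_poly_ring add_ac)
  show "comm_monoid (poly_ring n :: 'a mpoly ring)"
    by (intro comm_monoidI) (simp_all add: carrier_poly_ring mult_ac)
qed (simp_all add: carrier_poly_ring ring_distribs)

lemma a_inv_poly_ring:
  assumes "x \<in> carrier (poly_ring n)"
  shows "a_inv (poly_ring n :: 'a::field mpoly ring) x = - x"
proof -
  interpret cring "poly_ring n :: 'a mpoly ring" by (rule cring_poly_ring)
  have "- x \<in> carrier (poly_ring n)" "- x \<oplus>\<^bsub>poly_ring n\<^esub> x = \<zero>\<^bsub>poly_ring n\<^esub>"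
    using assms by (simp_all add: carrier_poly_ring)
  then show ?thesis using assms by (metis minus_equality)
qed

lemma ideal_poly_ringI:
  fixes I :: "'a::field mpoly set"
  assumes "I \<subseteq> polys_in {1..n}" "0 \<in> I" "\<And>a b. a \<in> I \<Longrightarrow> b \<in> I \<Longrightarrow> a + b \<in> I"
    "\<And>a. a \<in> I \<Longrightarrow> - a \<in> I" "\<And>a x. a \<in> I \<Longrightarrow> x \<in> polys_in {1..n} \<Longrightarrow> x * a \<in> I"
  shows "ideal I (poly_ring n)"
proof -
  interpret cring "poly_ring n :: 'a mpoly ring" by (rule cring_poly_ring)
  show ?thesis
  proof (rule idealI)
    show "ring (poly_ring n :: 'a mpoly ring)" by (rule ring_axioms)
    show "subgroup I (add_monoid (poly_ring n))"
    proof (rule subgroup.intro)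
      fix x assume x: "x \<in> I"
      have "inv\<^bsub>add_monoid (poly_ring n)\<^esub> x = a_inv (poly_ring n) x"
        by (simp add: a_inv_def)
      also have "\<dots> = - x"
        using x assms(1) by (intro a_inv_poly_ring) (auto simp: carrier_poly_ring)
      finally show "inv\<^bsub>add_monoid (poly_ring n)\<^esub> x \<in> I" using assms(4) x by simp
    qed (use assms(1-3) in \<open>auto simp: carrier_poly_ring\<close>)
  qed (use assms(5) in \<open>auto simp: carrier_poly_ring mult.commute\<close>)
qed

context
  fixes n :: nat and I :: "'a::field mpoly set"
  assumes I: "ideal I (poly_ring n)"
begin

lemma poly_ideal_subset: "I \<subseteq> polys_in {1..n}"
  using ideal.axioms(1)[OF I] additive_subgroup.a_subset carrier_poly_ring by metis

lemma poly_ideal_0: "0 \<in> I"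
  using ideal.axioms(1)[OF I] additive_subgroup.zero_closed by fastforce

lemma poly_ideal_add: "a \<in> I \<Longrightarrow> b \<in> I \<Longrightarrow> a + b \<in> I"
  using ideal.axioms(1)[OF I] additive_subgroup.a_closed by fastforce

lemma poly_ideal_mult_left: "a \<in> I \<Longrightarrow> x \<in> polys_in {1..n} \<Longrightarrow> x * a \<in> I"
  using ideal.I_l_closed[OF I] by (fastforce simp: carrier_poly_ring)

lemma poly_ideal_mult_right: "a \<in> I \<Longrightarrow> x \<in> polys_in {1..n} \<Longrightarrow> a * x \<in> I"
  using poly_ideal_mult_left by (simp add: mult.commute)

lemma poly_ideal_diff: "a \<in> I \<Longrightarrow> b \<in> I \<Longrightarrow> a - b \<in> I"
  using poly_ideal_add[of a "- b"] poly_ideal_mult_left[of b "- 1"]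
  by (simp add: polys_in_const flip: single_uminus)

lemma poly_ideal_sum: "(\<And>i. i \<in> A \<Longrightarrow> f i \<in> I) \<Longrightarrow> sum f A \<in> I"
  by (induction A rule: infinite_finite_induct) (auto intro: poly_ideal_0 poly_ideal_add)

end

context
  fixes n :: nat and P :: "'a::field mpoly set"
  assumes P: "primeideal P (poly_ring n)"
begin

lemma poly_prime_ideal: "ideal P (poly_ring n)"
  using P primeideal.axioms(1) by blast

lemma poly_prime_one_notin: "(1::'a mpoly) \<notin> P"
proof
  assume "1 \<in> P"
  then have "polys_in {1..n} \<subseteq> P" using poly_ideal_mult_right[OF poly_prime_ideal] by fastforce
  then show False
    using primeideal.I_notcarr[OF P] poly_ideal_subset[OF poly_prime_ideal] by (auto simp: carrier_poly_ring)
qed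

lemma poly_prime_mult_imp:
  "a \<in> polys_in {1..n} \<Longrightarrow> b \<in> polys_in {1..n} \<Longrightarrow> a * b \<in> P \<Longrightarrow> a \<in> P \<or> b \<in> P"
  using primeideal.I_prime[OF P] by (simp add: carrier_poly_ring)

end

lemma primeideal_poly_ringI:
  fixes P :: "'a::field mpoly set"
  assumes "ideal P (poly_ring n)" "1 \<notin> P"
    "\<And>a b. a \<in> polys_in {1..n} \<Longrightarrow> b \<in> polys_in {1..n} \<Longrightarrow> a * b \<in> P \<Longrightarrow> a \<in> P \<or> b \<in> P"
  shows "primeideal P (poly_ring n)"
  using assms by (intro primeidealI[OF assms(1) cring_poly_ring]) (auto simp: carrier_poly_ring)

section \<open>Ideals generated by variables\<close>

text \<open>The ideal generated by the variables indexed by \<open>C\<close> consists of the polynomials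
  each of whose monomials involves some variable of \<open>C\<close>; it is described this way,
  rather than through generators, so that its primality becomes elementary.\<close>

definition var_ideal :: "nat \<Rightarrow> nat set \<Rightarrow> 'a::field mpoly set" where
  "var_ideal n C = {p \<in> polys_in {1..n}. \<forall>m\<in>Poly_Mapping.keys p. Poly_Mapping.keys m \<inter> C \<noteq> {}}"

lemma var_ideal_ideal: "ideal (var_ideal n C :: 'a::field mpoly set) (poly_ring n)"
proof (rule ideal_poly_ringI)
  show "x * a \<in> var_ideal n C" if "a \<in> var_ideal n C" "x \<in> polys_in {1..n}" for a x :: "'a mpoly"
  proof -
    have "Poly_Mapping.keys m \<inter> C \<noteq> {}" if m: "m \<in> Poly_Mapping.keys (x * a)" for m
    proof -
      obtain u v where "m = u + v" "v \<in> Poly_Mapping.keys a"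
        using keys_mult[of x a] m by blast
      then show ?thesis using \<open>a \<in> var_ideal n C\<close> by (auto simp: var_ideal_def keys_add_nat)
    qed
    then show ?thesis using that by (auto simp: var_ideal_def)
  qed
next
  show "a + b \<in> var_ideal n C" if "a \<in> var_ideal n C" "b \<in> var_ideal n C" for a b :: "'a mpoly"
    using that keys_add[of a b] by (auto simp: var_ideal_def)
qed (auto simp: var_ideal_def)

lemma var_ideal_inter_polys_in:
  assumes "p \<in> var_ideal n C" "p \<in> polys_in D" "D \<inter> C = {}"
  shows "p = 0"
proof -
  have "Poly_Mapping.keys p = {}"
    using assms by (fastforce simp: var_ideal_def polys_in_def)
  then show ?thesis by simp
qed

lemma polys_in_decompose:
  assumes "(p::'a::field mpoly) \<in> polys_in {1..n}"
  obtains p1 p2 where "p = p1 + p2" "p1 \<in> polys_in ({1..n} - C)" "p2 \<in> var_ideal n C"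
proof -
  define A1 where "A1 = {m \<in> Poly_Mapping.keys p. Poly_Mapping.keys m \<inter> C = {}}"
  define A2 where "A2 = {m \<in> Poly_Mapping.keys p. Poly_Mapping.keys m \<inter> C \<noteq> {}}"
  define f where "f m = Poly_Mapping.single m (Poly_Mapping.lookup p m)" for m
  have km: "Poly_Mapping.keys m \<subseteq> {1..n}" if "m \<in> Poly_Mapping.keys p" for m
    using assms that by (simp add: polys_in_def)
  have "p = sum f (A1 \<union> A2)"
    unfolding f_def by (subst mpoly_monomial_expansion) (auto simp: A1_def A2_def intro: sum.cong)
  also have "\<dots> = sum f A1 + sum f A2"
    by (rule sum.union_disjoint) (auto simp: A1_def A2_def)
  finally have "p = sum f A1 + sum f A2" .
  moreover have "sum f A1 \<in> polys_in ({1..n} - C)" "sum f A2 \<in> polys_in {1..n}"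
    unfolding f_def by (auto simp: A1_def A2_def dest!: km intro!: polys_in_sum polys_in_single)
  moreover have "Poly_Mapping.keys (sum f A2) \<subseteq> A2"
    using keys_sum[of f A2] by (auto simp: f_def split: if_splits)
  then have "sum f A2 \<in> var_ideal n C"
    using \<open>sum f A2 \<in> polys_in {1..n}\<close> by (auto simp: var_ideal_def A2_def)
  ultimately show ?thesis using that by blast
qed

text \<open>Writing \<open>a = a\<^sub>1 + a\<^sub>2\<close>, \<open>b = b\<^sub>1 + b\<^sub>2\<close> with \<open>a\<^sub>1, b\<^sub>1\<close> free of the variables
  in \<open>C\<close>, the product \<open>a\<^sub>1 b\<^sub>1\<close> lies in the ideal but involves no variable of \<open>C\<close>.\<close>

lemma var_ideal_prime: "primeideal (var_ideal n C :: 'a::field mpoly set) (poly_ring n)"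
proof (rule primeideal_poly_ringI[OF var_ideal_ideal])
  show "1 \<notin> var_ideal n C" by (simp add: var_ideal_def)
  fix a b :: "'a mpoly"
  assume ab: "a \<in> polys_in {1..n}" "b \<in> polys_in {1..n}" "a * b \<in> var_ideal n C"
  show "a \<in> var_ideal n C \<or> b \<in> var_ideal n C"
  proof (rule ccontr)
    assume nab: "\<not> (a \<in> var_ideal n C \<or> b \<in> var_ideal n C)"
    obtain a1 a2 where a: "a = a1 + a2" "a1 \<in> polys_in ({1..n} - C)" "a2 \<in> var_ideal n C"
      using polys_in_decompose[OF ab(1)] .
    obtain b1 b2 where b: "b = b1 + b2" "b1 \<in> polys_in ({1..n} - C)" "b2 \<in> var_ideal n C"
      using polys_in_decompose[OF ab(2)] .
    have "a1 \<noteq> 0" "b1 \<noteq> 0" using a b nab by auto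
    have "a1 \<in> polys_in {1..n}" using a(2) by (auto intro: polys_in_mono)
    then have "a1 * b2 + a2 * b \<in> var_ideal n C"
      using var_ideal_ideal a(3) b(3) ab(2)
      by (intro poly_ideal_add poly_ideal_mult_left poly_ideal_mult_right)
    then have "a * b - (a1 * b2 + a2 * b) \<in> var_ideal n C"
      using ab(3) var_ideal_ideal by (intro poly_ideal_diff)
    moreover have "a * b - (a1 * b2 + a2 * b) = a1 * b1"
      using a b by (simp add: algebra_simps)
    ultimately have "a1 * b1 \<in> var_ideal n C" by simp
    then have "a1 * b1 = 0"
      by (rule var_ideal_inter_polys_in) (use a b in auto)
    with \<open>a1 \<noteq> 0\<close> \<open>b1 \<noteq> 0\<close> show False by simp
  qed
qed

lemma var_in_var_ideal_iff:
  assumes "i \<in> {1..n}"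
  shows "(var i :: 'a::field mpoly) \<in> var_ideal n C \<longleftrightarrow> i \<in> C"
proof -
  have "Poly_Mapping.keys (var i :: 'a mpoly) = {Poly_Mapping.single i 1}"
    by (simp add: var_def)
  then show ?thesis using assms by (auto simp: var_ideal_def var_in_polys_in)
qed

lemma var_ideal_subset:
  fixes I :: "'a::field mpoly set"
  assumes I: "ideal I (poly_ring n)" and vars: "\<And>i. i \<in> C \<Longrightarrow> i \<in> {1..n} \<Longrightarrow> var i \<in> I"
  shows "var_ideal n C \<subseteq> I"
proof
  fix p :: "'a mpoly" assume p: "p \<in> var_ideal n C"
  have "(\<Sum>m\<in>Poly_Mapping.keys p. Poly_Mapping.single m (Poly_Mapping.lookup p m)) \<in> I"
  proof (rule poly_ideal_sum[OF I])
    fix m assume m: "m \<in> Poly_Mapping.keys p"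
    then obtain i where i: "i \<in> Poly_Mapping.keys m" "i \<in> C" using p by (auto simp: var_ideal_def)
    have km: "Poly_Mapping.keys m \<subseteq> {1..n}" using p m by (auto simp: var_ideal_def polys_in_def)
    define k where "k = Poly_Mapping.lookup m i"
    have "k \<noteq> 0" using i(1) by (simp add: k_def in_keys_iff)
    then have "Poly_Mapping.single m (Poly_Mapping.lookup p m)
        = Poly_Mapping.single (Poly_Mapping.update i 0 m) (Poly_Mapping.lookup p m) * var i ^ (k - 1) * var i"
      by (subst single_monomial_split[of _ _ i]) (simp add: k_def mult.assoc flip: power_Suc2)
    also have "\<dots> \<in> I"
      using km i by (intro poly_ideal_mult_left[OF I] vars polys_in_mult polys_in_power
          polys_in_single var_in_polys_in) (auto simp: keys_update)
    finally show "Poly_Mapping.single m (Poly_Mapping.lookup p m) \<in> I" .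
  qed
  then show "p \<in> I" by (simp flip: mpoly_monomial_expansion)
qed

lemma var_ideal_mono: "C \<subseteq> D \<Longrightarrow> var_ideal n C \<subseteq> var_ideal n D"
  by (auto simp: var_ideal_def)

lemma var_ideal_psubset:
  assumes "C \<subset> D" "D \<subseteq> {1..n}"
  shows "(var_ideal n C :: 'a::field mpoly set) \<subset> var_ideal n D"
proof -
  obtain j where j: "j \<in> D" "j \<notin> C" "j \<in> {1..n}" using assms by blast
  then have "(var j :: 'a mpoly) \<in> var_ideal n D - var_ideal n C"
    using var_in_var_ideal_iff by blast
  moreover have "var_ideal n C \<subseteq> (var_ideal n D :: 'a mpoly set)"
    using var_ideal_mono assms(1) by blast
  ultimately show ?thesis by blast
qed

section \<open>Heights of the ideals generated by variables\<close>

lemma elimination_identity: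
  fixes v :: "'i \<Rightarrow> 'k \<Rightarrow> 'r::comm_ring"
  assumes "finite T" "a \<in> T"
  shows "(\<Sum>t\<in>T. (if t = a then - (\<Sum>s\<in>T - {a}. mu s * v s k) else mu t * v a k) * v t k')
       = (\<Sum>t\<in>T - {a}. mu t * (v a k * v t k' - v t k * v a k'))"
proof -
  let ?lam = "\<lambda>t. if t = a then - (\<Sum>s\<in>T - {a}. mu s * v s k) else mu t * v a k"
  have "(\<Sum>t\<in>T. ?lam t * v t k') = ?lam a * v a k' + (\<Sum>t\<in>T - {a}. ?lam t * v t k')"
    using assms by (simp add: sum.remove)
  also have "(\<Sum>t\<in>T - {a}. ?lam t * v t k') = (\<Sum>t\<in>T - {a}. mu t * v a k * v t k')"
    by (rule sum.cong) auto
  finally show ?thesis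
    by (simp add: sum_distrib_left right_diff_distrib sum_subtractf mult_ac)
qed

text \<open>Fraction-free Gaussian elimination: eliminating an equation by cross-multiplication with
  a nonzero pivot keeps all coefficients in the subring \<open>B\<close>.\<close>

lemma homogeneous_system_nontrivial_solution:
  fixes v :: "'i \<Rightarrow> 'k \<Rightarrow> 'r::idom" and B :: "'r set"
  assumes B0: "0 \<in> B" and B1: "1 \<in> B" and Badd: "\<And>x y. x \<in> B \<Longrightarrow> y \<in> B \<Longrightarrow> x + y \<in> B"
    and Bmult: "\<And>x y. x \<in> B \<Longrightarrow> y \<in> B \<Longrightarrow> x * y \<in> B" and Bneg: "\<And>x. x \<in> B \<Longrightarrow> - x \<in> B"
    and "finite K" "finite T" "card K < card T" "\<And>t k. t \<in> T \<Longrightarrow> k \<in> K \<Longrightarrow> v t k \<in> B"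
  shows "\<exists>lam. (\<forall>t\<in>T. lam t \<in> B) \<and> (\<exists>t\<in>T. lam t \<noteq> 0) \<and> (\<forall>k\<in>K. (\<Sum>t\<in>T. lam t * v t k) = 0)"
proof -
  have Bsum: "sum f F \<in> B" if "\<And>x. x \<in> F \<Longrightarrow> f x \<in> B" for f :: "'i \<Rightarrow> 'r" and F
    using that by (induction F rule: infinite_finite_induct) (auto intro: B0 Badd)
  show ?thesis
    using assms(6-)
  proof (induction K arbitrary: T v rule: finite_induct)
    case empty
    then obtain t0 where "t0 \<in> T" by fastforce
    then show ?case using B0 B1
      by (intro exI[of _ "\<lambda>t. if t = t0 then 1 else 0"]) auto
  next
    case (insert k K)
    show ?case
    proof (cases "\<forall>t\<in>T. v t k = 0")
      case True
      have "card K < card T"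
        using insert.prems(2) insert.hyps by simp
      then obtain lam where "\<forall>t\<in>T. lam t \<in> B" "\<exists>t\<in>T. lam t \<noteq> 0"
        "\<forall>k\<in>K. (\<Sum>t\<in>T. lam t * v t k) = 0"
        using insert.IH[of T v] insert.prems(1,3) by blast
      then show ?thesis using True by auto
    next
      case False
      then obtain a where a: "a \<in> T" "v a k \<noteq> 0" by blast
      define w where "w t k' = v a k * v t k' - v t k * v a k'" for t k'
      have wB: "w t k' \<in> B" if "t \<in> T - {a}" "k' \<in> K" for t k'
        using that a insert.prems(3) unfolding w_def diff_conv_add_uminus
        by (intro Badd Bmult Bneg) auto
      have "card K < card (T - {a})"
        using insert.prems(1,2) insert.hyps a(1) by simp
      then have "\<exists>mu. (\<forall>t\<in>T - {a}. mu t \<in> B) \<and> (\<exists>t\<in>T - {a}. mu t \<noteq> 0) \<and>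
          (\<forall>k'\<in>K. (\<Sum>t\<in>T - {a}. mu t * w t k') = 0)"
        using insert.prems(1) wB by (intro insert.IH) auto
      then obtain mu where mu: "\<forall>t\<in>T - {a}. mu t \<in> B" "\<exists>t\<in>T - {a}. mu t \<noteq> 0"
        "\<forall>k'\<in>K. (\<Sum>t\<in>T - {a}. mu t * w t k') = 0" by blast
      define lam where "lam t = (if t = a then - (\<Sum>s\<in>T - {a}. mu s * v s k) else mu t * v a k)" for t
      have "\<forall>t\<in>T. lam t \<in> B"
        using mu(1) a insert.prems(3) unfolding lam_def by (auto intro!: Bneg Bsum Bmult)
      moreover have "\<exists>t\<in>T. lam t \<noteq> 0"
        using mu(2) a by (auto simp: lam_def)
      moreover have "(\<Sum>t\<in>T. lam t * v t k') = 0" if "k' \<in> insert k K" for k'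
        unfolding lam_def elimination_identity[OF insert.prems(1) a(1)]
        using that mu(3) by (auto simp: w_def)
      ultimately show ?thesis by blast
    qed
  qed
qed

lemma sum_linear_relation_cancel:
  fixes lam :: "'i \<Rightarrow> 'r::comm_ring"
  assumes "\<forall>m\<in>M. (\<Sum>t\<in>T. lam t * B t m) = 0"
  shows "(\<Sum>t\<in>T. lam t * (a * y t - (\<Sum>m\<in>M. B t m * u m))) = a * (\<Sum>t\<in>T. lam t * y t)"
proof -
  have "(\<Sum>t\<in>T. lam t * (\<Sum>m\<in>M. B t m * u m)) = (\<Sum>m\<in>M. (\<Sum>t\<in>T. lam t * B t m) * u m)"
    by (simp add: sum_distrib_left sum_distrib_right mult_ac sum.swap[of _ T])
  also have "\<dots> = 0" using assms by simp
  finally show ?thesis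
    by (simp add: right_diff_distrib sum_subtractf sum_distrib_left mult_ac)
qed

definition indep_vars :: "nat \<Rightarrow> 'a::field mpoly set \<Rightarrow> nat set \<Rightarrow> bool" where
  "indep_vars n Q S \<longleftrightarrow> S \<subseteq> {1..n} \<and> (\<forall>p\<in>polys_in S. p \<in> Q \<longrightarrow> p = 0)"

definition var_power_sums :: "nat \<Rightarrow> nat set \<Rightarrow> 'a::field mpoly set" where
  "var_power_sums j S =
     {p. \<exists>g D. (\<forall>i. g i \<in> polys_in S) \<and> (\<forall>i>D. g i = 0) \<and> p = (\<Sum>i\<le>D. g i * var j ^ i)}"

lemma sum_atMost_eq_if_zero_above:
  fixes f :: "nat \<Rightarrow> 'b::comm_monoid_add"
  assumes "\<forall>i>D1. f i = 0" "D1 \<le> D"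
  shows "(\<Sum>i\<le>D. f i) = (\<Sum>i\<le>D1. f i)"
  using assms by (intro sum.mono_neutral_right) auto

lemma var_power_sums_add:
  assumes "p \<in> var_power_sums j S" "q \<in> var_power_sums j S"
  shows "p + q \<in> var_power_sums j S"
proof -
  obtain g1 D1 where 1: "\<forall>i. g1 i \<in> polys_in S" "\<forall>i>D1. g1 i = 0" "p = (\<Sum>i\<le>D1. g1 i * var j ^ i)"
    using assms(1) by (auto simp: var_power_sums_def)
  obtain g2 D2 where 2: "\<forall>i. g2 i \<in> polys_in S" "\<forall>i>D2. g2 i = 0" "q = (\<Sum>i\<le>D2. g2 i * var j ^ i)"
    using assms(2) by (auto simp: var_power_sums_def)
  define D where "D = max D1 D2"
  have "p = (\<Sum>i\<le>D. g1 i * var j ^ i)"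
    using 1 by (subst sum_atMost_eq_if_zero_above[of D1]) (simp_all add: D_def)
  moreover have "q = (\<Sum>i\<le>D. g2 i * var j ^ i)"
    using 2 by (subst sum_atMost_eq_if_zero_above[of D2]) (simp_all add: D_def)
  ultimately
  have "p + q = (\<Sum>i\<le>D. (g1 i + g2 i) * var j ^ i)"
    by (simp add: sum.distrib distrib_right)
  moreover have "\<forall>i. g1 i + g2 i \<in> polys_in S" "\<forall>i>D. g1 i + g2 i = 0"
    using 1(1,2) 2(1,2) by (auto simp: D_def)
  ultimately show ?thesis
    unfolding var_power_sums_def by (intro CollectI exI[of _ "\<lambda>i. g1 i + g2 i"] exI[of _ D]) simp
qed

lemma single_in_var_power_sums:
  assumes "Poly_Mapping.keys m \<subseteq> insert j S"
  shows "(Poly_Mapping.single m a :: 'a::field mpoly) \<in> var_power_sums j S"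
proof -
  define k where "k = Poly_Mapping.lookup m j"
  define g where "g i = (if i = k then Poly_Mapping.single (Poly_Mapping.update j 0 m) a else 0)" for i
  have "\<forall>i. g i \<in> polys_in S"
    using assms unfolding g_def by (auto simp: keys_update intro!: polys_in_single)
  moreover have "\<forall>i>k. g i = 0" by (simp add: g_def)
  moreover have "(\<Sum>i\<le>k. g i * var j ^ i) = g k * var j ^ k"
    by (simp add: g_def flip: lessThan_Suc_atMost)
  moreover have "g k * var j ^ k = Poly_Mapping.single m a"
    unfolding g_def k_def by (simp flip: single_monomial_split)
  ultimately show ?thesis
    unfolding var_power_sums_def by (intro CollectI exI[of _ g] exI[of _ k]) simp
qed

lemma polys_in_insert_subset_var_power_sums:
  "(polys_in (insert j S) :: 'a::field mpoly set) \<subseteq> var_power_sums j S"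
proof
  fix p :: "'a mpoly" assume p: "p \<in> polys_in (insert j S)"
  have "(\<Sum>m\<in>A. Poly_Mapping.single m (Poly_Mapping.lookup p m)) \<in> var_power_sums j S"
    if "finite A" "A \<subseteq> Poly_Mapping.keys p" for A
    using that
  proof (induction A rule: finite_induct)
    case empty
    show ?case unfolding var_power_sums_def
      by (intro CollectI exI[of _ "\<lambda>i. 0"] exI[of _ 0]) simp
  next
    case (insert m A)
    have "Poly_Mapping.keys m \<subseteq> insert j S"
      using p insert.prems by (auto simp: polys_in_def)
    then show ?case
      using insert by (simp add: var_power_sums_add single_in_var_power_sums)
  qed
  then show "p \<in> var_power_sums j S"
    by (subst mpoly_monomial_expansion) simp
qed

lemma sum_powers_lead_term:
  fixes g :: "nat \<Rightarrow> 'b::comm_ring_1"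
  assumes "\<forall>i>D. g i = 0" "(\<Sum>i\<le>D. g i * x ^ i) \<noteq> 0"
  obtains d where "g d \<noteq> 0" "(\<Sum>i\<le>D. g i * x ^ i) = g d * x ^ d + (\<Sum>i<d. g i * x ^ i)"
proof -
  define A where "A = {i. i \<le> D \<and> g i \<noteq> 0}"
  have "A \<noteq> {}"
  proof
    assume "A = {}"
    then have "\<forall>i\<le>D. g i = 0" by (auto simp: A_def)
    then show False using assms(2) by simp
  qed
  moreover have "finite A" by (simp add: A_def)
  ultimately have d: "Max A \<in> A" by (rule Max_in[rotated])
  have above: "\<forall>i>Max A. g i = 0"
  proof (intro allI impI)
    fix i assume "Max A < i"
    then have "i \<notin> A" using Max_ge[OF \<open>finite A\<close>, of i] by auto
    then show "g i = 0" using assms(1) by (auto simp: A_def)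
  qed
  have "Max A \<le> D" using d by (simp add: A_def)
  then have "(\<Sum>i\<le>D. g i * x ^ i) = (\<Sum>i\<le>Max A. g i * x ^ i)"
    using above by (intro sum_atMost_eq_if_zero_above) simp_all
  also have "\<dots> = g (Max A) * x ^ Max A + (\<Sum>i<Max A. g i * x ^ i)"
    by (subst lessThan_Suc_atMost[symmetric]) (simp only: sum.lessThan_Suc add.commute)
  finally have "(\<Sum>i\<le>D. g i * x ^ i) = g (Max A) * x ^ Max A + (\<Sum>i<Max A. g i * x ^ i)" .
  moreover have "g (Max A) \<noteq> 0" using d by (simp add: A_def)
  ultimately show ?thesis by (rule that[rotated])
qed

lemma dependent_var_relation:
  fixes Q :: "'a::field mpoly set"
  assumes "indep_vars n Q S" "j \<in> {1..n}" "\<not> indep_vars n Q (insert j S)"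
  obtains d c h where "d \<ge> 1" "c \<in> polys_in S" "c \<noteq> 0" "\<forall>i. h i \<in> polys_in S"
    "c * var j ^ d + (\<Sum>i<d. h i * var j ^ i) \<in> Q"
proof -
  obtain p where p: "p \<in> polys_in (insert j S)" "p \<in> Q" "p \<noteq> 0"
    using assms by (auto simp: indep_vars_def)
  have "p \<in> var_power_sums j S"
    using p(1) polys_in_insert_subset_var_power_sums by blast
  then obtain g D where g: "\<forall>i. g i \<in> polys_in S" "\<forall>i>D. g i = 0" "p = (\<Sum>i\<le>D. g i * var j ^ i)"
    unfolding var_power_sums_def mem_Collect_eq by (elim exE conjE) (rule that)
  obtain d where d: "g d \<noteq> 0" "(\<Sum>i\<le>D. g i * var j ^ i) = g d * var j ^ d + (\<Sum>i<d. g i * var j ^ i)"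
    using sum_powers_lead_term[OF g(2)] p(3) unfolding g(3) by blast
  have "d \<noteq> 0"
  proof
    assume "d = 0"
    then have "p = g 0" using d(2) g(3) by simp
    then show False using assms(1) g(1) p(2) d(1) \<open>d = 0\<close> by (auto simp: indep_vars_def)
  qed
  then show ?thesis
    using that[of d "g d" g] d g(1,3) p(2) by simp
qed

text \<open>Peel off \<open>\<lambda>\<^sub>0 \<in> Q'\<close> and cancel \<open>y \<notin> Q\<close> in the prime \<open>Q\<close>.\<close>

lemma coeffs_in_ideal_if_power_sum_in_prime:
  fixes Q Q' :: "'a::field mpoly set"
  assumes Q: "primeideal Q (poly_ring n)" and Q': "ideal Q' (poly_ring n)" and "Q \<subseteq> Q'"
    and y: "y \<in> polys_in {1..n}" "y \<notin> Q" "y \<in> Q'"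
    and "\<And>i. i \<le> N \<Longrightarrow> lam i \<in> polys_in {1..n}"
    and "\<And>i. i \<le> N \<Longrightarrow> lam i \<in> Q' \<Longrightarrow> lam i \<in> Q"
    and "(\<Sum>i\<le>N. lam i * y ^ i) \<in> Q"
  shows "\<forall>i\<le>N. lam i \<in> Q'"
  using assms(7-)
proof (induction N arbitrary: lam)
  case 0
  then show ?case using \<open>Q \<subseteq> Q'\<close> by auto
next
  case (Suc N)
  have eq: "(\<Sum>i\<le>Suc N. lam i * y ^ i) = lam 0 + y * (\<Sum>i\<le>N. lam (Suc i) * y ^ i)"
    by (subst sum.atMost_Suc_shift) (simp add: sum_distrib_left mult_ac)
  have rest: "(\<Sum>i\<le>N. lam (Suc i) * y ^ i) \<in> polys_in {1..n}"
    using Suc.prems(1) y by (auto intro!: polys_in_sum)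
  have "(\<Sum>i\<le>Suc N. lam i * y ^ i) - y * (\<Sum>i\<le>N. lam (Suc i) * y ^ i) \<in> Q'"
    using Suc.prems(3) \<open>Q \<subseteq> Q'\<close> y(3) rest
    by (intro poly_ideal_diff[OF Q'] poly_ideal_mult_right[OF Q']) auto
  then have "lam 0 \<in> Q'" unfolding eq by simp
  then have "(\<Sum>i\<le>Suc N. lam i * y ^ i) - lam 0 \<in> Q"
    using Suc.prems by (intro poly_ideal_diff[OF poly_prime_ideal[OF Q]]) simp_all
  then have "y * (\<Sum>i\<le>N. lam (Suc i) * y ^ i) \<in> Q" unfolding eq by simp
  then have "(\<Sum>i\<le>N. lam (Suc i) * y ^ i) \<in> Q"
    using poly_prime_mult_imp[OF Q y(1) rest] y(2) by blast
  then have "\<forall>i\<le>N. lam (Suc i) \<in> Q'"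
    using Suc.IH[of "\<lambda>i. lam (Suc i)"] Suc.prems by simp
  then show ?case
    using \<open>lam 0 \<in> Q'\<close> by (metis Suc_le_mono not0_implies_Suc)
qed

text \<open>Multiplying by a power of \<open>lc = \<Prod>\<^sub>j c\<^sub>j\<close>,
  every polynomial becomes congruent modulo \<open>Q\<close> to a \<open>\<Bbbk>[x\<^sub>S]\<close>-combination of the finitely
  many \<open>reduced\<close> monomials, those with exponent of \<open>x\<^sub>j\<close> below \<open>d\<^sub>j\<close>.\<close>

locale var_relations =
  fixes n :: nat and Q :: "'a::field mpoly set" and S :: "nat set"
    and d :: "nat \<Rightarrow> nat" and c :: "nat \<Rightarrow> 'a mpoly" and h :: "nat \<Rightarrow> nat \<Rightarrow> 'a mpoly"
  assumes Q: "primeideal Q (poly_ring n)" and indep: "indep_vars n Q S"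
    and d_pos: "\<And>j. j \<in> {1..n} - S \<Longrightarrow> d j \<ge> 1"
    and c_in: "\<And>j. j \<in> {1..n} - S \<Longrightarrow> c j \<in> polys_in S"
    and c_nonzero: "\<And>j. j \<in> {1..n} - S \<Longrightarrow> c j \<noteq> 0"
    and h_in: "\<And>j i. j \<in> {1..n} - S \<Longrightarrow> h j i \<in> polys_in S"
    and relation: "\<And>j. j \<in> {1..n} - S \<Longrightarrow> c j * var j ^ d j + (\<Sum>i<d j. h j i * var j ^ i) \<in> Q"
begin

definition "dep = {1..n} - S"
definition "lc = (\<Prod>j\<in>dep. c j)"
definition "reduced = {m. Poly_Mapping.keys m \<subseteq> dep \<and> (\<forall>j\<in>dep. Poly_Mapping.lookup m j < d j)}"
definition "reduced_span =
  {w. \<exists>b. (\<forall>m\<in>reduced. b m \<in> polys_in S) \<and> w = (\<Sum>m\<in>reduced. b m * monomial m)}"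
definition "reduced_span_mod = {x. \<exists>w\<in>reduced_span. x - w \<in> Q}"
definition "sat = {x. \<exists>e. lc ^ e * x \<in> reduced_span_mod}"

lemma Q_ideal: "ideal Q (poly_ring n)"
  by (rule poly_prime_ideal[OF Q])

lemma S_polys_in_ring: "x \<in> polys_in S \<Longrightarrow> x \<in> polys_in {1..n}"
  using indep by (auto simp: indep_vars_def intro: polys_in_mono)

lemma Q_indep: "p \<in> polys_in S \<Longrightarrow> p \<in> Q \<Longrightarrow> p = 0"
  using indep by (simp add: indep_vars_def)

lemma finite_dep: "finite dep"
  by (simp add: dep_def)

lemma finite_reduced: "finite reduced"
proof -
  have "inj_on (\<lambda>m. restrict (Poly_Mapping.lookup m) dep) reduced"
  proof (rule inj_onI)
    fix x y assume xy: "x \<in> reduced" "y \<in> reduced"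
      "restrict (Poly_Mapping.lookup x) dep = restrict (Poly_Mapping.lookup y) dep"
    show "x = y"
    proof (rule poly_mapping_eqI)
      fix k
      show "Poly_Mapping.lookup x k = Poly_Mapping.lookup y k"
      proof (cases "k \<in> dep")
        case True
        then show ?thesis using xy(3) by (metis restrict_apply')
      next
        case False
        then have "k \<notin> Poly_Mapping.keys x" "k \<notin> Poly_Mapping.keys y"
          using xy(1,2) by (auto simp: reduced_def)
        then show ?thesis by (simp add: in_keys_iff)
      qed
    qed
  qed
  moreover have "(\<lambda>m. restrict (Poly_Mapping.lookup m) dep) ` reduced \<subseteq> PiE dep (\<lambda>j. {..<d j})"
    by (auto simp: reduced_def PiE_def extensional_def)
  moreover have "finite (PiE dep (\<lambda>j. {..<d j}))"
    using finite_dep by (rule finite_PiE) simp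
  ultimately show ?thesis by (meson finite_imageD finite_subset)
qed

lemma lc_in_polys_in: "lc \<in> polys_in S"
  unfolding lc_def using c_in by (auto simp: dep_def)

lemma lc_nonzero: "lc \<noteq> 0"
  unfolding lc_def using c_nonzero by (simp add: dep_def)

lemma reduced_span_0: "0 \<in> reduced_span"
  unfolding reduced_span_def by (intro CollectI exI[of _ "\<lambda>m. 0"]) simp

lemma reduced_span_add:
  assumes "x \<in> reduced_span" "y \<in> reduced_span"
  shows "x + y \<in> reduced_span"
proof -
  obtain b1 b2 where b: "\<forall>m\<in>reduced. b1 m \<in> polys_in S" "x = (\<Sum>m\<in>reduced. b1 m * monomial m)"
    "\<forall>m\<in>reduced. b2 m \<in> polys_in S" "y = (\<Sum>m\<in>reduced. b2 m * monomial m)"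
    using assms unfolding reduced_span_def by blast
  then have "x + y = (\<Sum>m\<in>reduced. (b1 m + b2 m) * monomial m)"
    by (simp add: sum.distrib distrib_right)
  moreover have "\<forall>m\<in>reduced. b1 m + b2 m \<in> polys_in S" using b by auto
  ultimately show ?thesis
    unfolding reduced_span_def by (intro CollectI exI[of _ "\<lambda>m. b1 m + b2 m"] conjI)
qed

lemma reduced_span_mult:
  assumes "x \<in> reduced_span" "a \<in> polys_in S"
  shows "a * x \<in> reduced_span"
proof -
  obtain b where b: "\<forall>m\<in>reduced. b m \<in> polys_in S" "x = (\<Sum>m\<in>reduced. b m * monomial m)"
    using assms(1) unfolding reduced_span_def by blast
  then have "a * x = (\<Sum>m\<in>reduced. (a * b m) * monomial m)"
    by (simp add: sum_distrib_left mult.assoc)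
  moreover have "\<forall>m\<in>reduced. a * b m \<in> polys_in S" using b assms(2) by auto
  ultimately show ?thesis
    unfolding reduced_span_def by (intro CollectI exI[of _ "\<lambda>m. a * b m"] conjI)
qed

lemma monomial_in_reduced_span:
  assumes "m \<in> reduced"
  shows "monomial m \<in> reduced_span"
proof -
  have "(\<Sum>m'\<in>reduced. (if m' = m then 1 else 0) * monomial m') =
      (\<Sum>m'\<in>reduced. if m' = m then monomial m else 0)"
    by (rule sum.cong) auto
  also have "\<dots> = monomial m" using assms finite_reduced by (subst sum.delta) auto
  finally have "monomial m = (\<Sum>m'\<in>reduced. (if m' = m then 1 else 0) * monomial m')" ..
  then show ?thesis
    unfolding reduced_span_def by (intro CollectI exI[of _ "\<lambda>m'. if m' = m then 1 else 0"] conjI) auto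
qed

lemma reduced_span_sum:
  "finite A \<Longrightarrow> (\<And>i. i \<in> A \<Longrightarrow> f i \<in> reduced_span) \<Longrightarrow> sum f A \<in> reduced_span"
  by (induction A rule: finite_induct) (auto intro: reduced_span_0 reduced_span_add)

lemma reduced_span_mod_add:
  assumes "x \<in> reduced_span_mod" "y \<in> reduced_span_mod"
  shows "x + y \<in> reduced_span_mod"
proof -
  obtain w1 w2 where w: "w1 \<in> reduced_span" "x - w1 \<in> Q" "w2 \<in> reduced_span" "y - w2 \<in> Q"
    using assms unfolding reduced_span_mod_def by blast
  then have "(x + y) - (w1 + w2) \<in> Q"
    using poly_ideal_add[OF Q_ideal, of "x - w1" "y - w2"] by (simp add: algebra_simps)
  then show ?thesis
    using reduced_span_add[OF w(1,3)] unfolding reduced_span_mod_def by blast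
qed

lemma reduced_span_mod_mult:
  assumes "x \<in> reduced_span_mod" "a \<in> polys_in S"
  shows "a * x \<in> reduced_span_mod"
proof -
  obtain w where w: "w \<in> reduced_span" "x - w \<in> Q"
    using assms(1) unfolding reduced_span_mod_def by blast
  then have "a * x - a * w \<in> Q"
    using poly_ideal_mult_left[OF Q_ideal w(2) S_polys_in_ring[OF assms(2)]]
    by (simp add: algebra_simps)
  then show ?thesis
    using reduced_span_mult[OF w(1) assms(2)] unfolding reduced_span_mod_def by blast
qed

lemma reduced_span_subset_mod: "x \<in> reduced_span \<Longrightarrow> x \<in> reduced_span_mod"
  unfolding reduced_span_mod_def using poly_ideal_0[OF Q_ideal] by force

lemma Q_subset_reduced_span_mod: "x \<in> Q \<Longrightarrow> x \<in> reduced_span_mod"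
  unfolding reduced_span_mod_def using reduced_span_0 by force

lemma reduced_span_mod_sum:
  "finite A \<Longrightarrow> (\<And>i. i \<in> A \<Longrightarrow> f i \<in> reduced_span_mod) \<Longrightarrow> sum f A \<in> reduced_span_mod"
  by (induction A rule: finite_induct) (auto intro: reduced_span_mod_add reduced_span_subset_mod reduced_span_0)

lemma var_mult_monomial_in_reduced_span:
  assumes m: "m \<in> reduced" and j: "j \<in> dep" and "Poly_Mapping.lookup m j + 1 < d j"
  shows "var j * monomial m \<in> reduced_span"
proof -
  have "m + Poly_Mapping.single j 1 \<in> reduced"
    using assms by (auto simp: reduced_def keys_add_nat lookup_add lookup_single when_def)
  moreover have "var j * monomial m = monomial (m + Poly_Mapping.single j 1)"
    by (simp add: monomial_add monomial_single mult.commute)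
  ultimately show ?thesis
    by (metis monomial_in_reduced_span)
qed

text \<open>At the top exponent the relation for \<open>x\<^sub>j\<close> rewrites \<open>c\<^sub>j x\<^sub>j\<^bsup>d\<^sub>j\<^esup>\<close> into lower powers.\<close>

lemma c_var_mult_top_monomial_in_reduced_span_mod:
  assumes m: "m \<in> reduced" and j: "j \<in> dep" and top: "Poly_Mapping.lookup m j + 1 = d j"
  shows "c j * (var j * monomial m) \<in> reduced_span_mod"
proof -
  have jJ: "j \<in> {1..n} - S" using j by (simp add: dep_def)
  define m' where "m' = Poly_Mapping.update j 0 m"
  have m'_j: "m' + Poly_Mapping.single j i \<in> reduced" if "i < d j" for i
    using m j that
    by (auto simp: reduced_def m'_def keys_add_nat keys_update lookup_add lookup_update lookup_single
        when_def)
  define w where "w = (\<Sum>i<d j. h j i * monomial (m' + Poly_Mapping.single j i))"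
  have "w \<in> reduced_span"
    unfolding w_def using m'_j h_in[OF jJ]
    by (intro reduced_span_sum reduced_span_mult monomial_in_reduced_span) auto
  then have "(-1) * w \<in> reduced_span" by (rule reduced_span_mult) simp
  have "monomial m = monomial m' * var j ^ Poly_Mapping.lookup m j"
    unfolding monomial_def m'_def by (rule single_monomial_split)
  then have "var j * monomial m = monomial m' * (var j * var j ^ Poly_Mapping.lookup m j)"
    by (metis mult.left_commute)
  also have "\<dots> = monomial m' * var j ^ d j"
    unfolding top[symmetric] by simp
  finally have shift: "var j * monomial m = monomial m' * var j ^ d j" .
  have "monomial m' \<in> polys_in {1..n}"
    using m j by (intro monomial_in_polys_in) (auto simp: reduced_def m'_def keys_update dep_def)
  then have "monomial m' * (c j * var j ^ d j + (\<Sum>i<d j. h j i * var j ^ i)) \<in> Q"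
    using relation[OF jJ] by (intro poly_ideal_mult_left[OF Q_ideal])
  then have "c j * (var j * monomial m) - (-1) * w \<in> Q"
    by (simp add: shift w_def monomial_add monomial_single algebra_simps sum_distrib_left sum_negf)
  then show ?thesis
    using \<open>(-1) * w \<in> reduced_span\<close> unfolding reduced_span_mod_def by blast
qed

lemma c_var_mult_monomial_in_reduced_span_mod:
  assumes "m \<in> reduced" "j \<in> dep"
  shows "c j * (var j * monomial m) \<in> reduced_span_mod"
proof (cases "Poly_Mapping.lookup m j + 1 < d j")
  case True
  have "c j \<in> polys_in S" using assms(2) c_in by (simp add: dep_def)
  then show ?thesis
    by (intro reduced_span_subset_mod reduced_span_mult[OF var_mult_monomial_in_reduced_span[OF assms True]])
next
  case False
  then have "Poly_Mapping.lookup m j + 1 = d j"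
    using assms by (auto simp: reduced_def)
  then show ?thesis by (rule c_var_mult_top_monomial_in_reduced_span_mod[OF assms])
qed

lemma reduced_span_mod_var_mult:
  assumes x: "x \<in> reduced_span_mod" and j: "j \<in> dep"
  shows "lc * (var j * x) \<in> reduced_span_mod"
proof -
  define lc' where "lc' = (\<Prod>i\<in>dep - {j}. c i)"
  have lc: "lc = c j * lc'" unfolding lc_def lc'_def using finite_dep j by (simp add: prod.remove)
  have "lc' \<in> polys_in S" unfolding lc'_def using c_in by (auto simp: dep_def)
  obtain w where w: "w \<in> reduced_span" "x - w \<in> Q"
    using x unfolding reduced_span_mod_def by blast
  obtain b where b: "\<forall>m\<in>reduced. b m \<in> polys_in S" "w = (\<Sum>m\<in>reduced. b m * monomial m)"
    using w(1) unfolding reduced_span_def by blast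
  have "lc * (var j * w) = (\<Sum>m\<in>reduced. (b m * lc') * (c j * (var j * monomial m)))"
    by (simp add: b(2) lc sum_distrib_left mult_ac)
  also have "\<dots> \<in> reduced_span_mod"
  proof (rule reduced_span_mod_sum[OF finite_reduced])
    fix m assume "m \<in> reduced"
    then show "(b m * lc') * (c j * (var j * monomial m)) \<in> reduced_span_mod"
      using b(1) \<open>lc' \<in> polys_in S\<close>
      by (intro reduced_span_mod_mult[OF c_var_mult_monomial_in_reduced_span_mod[OF _ j]]) auto
  qed
  finally have "lc * (var j * w) \<in> reduced_span_mod" .
  moreover have "(lc * var j) * (x - w) \<in> reduced_span_mod"
    using j w(2) lc_in_polys_in
    by (intro Q_subset_reduced_span_mod poly_ideal_mult_left[OF Q_ideal] polys_in_mult S_polys_in_ring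
        var_in_polys_in) (auto simp: dep_def)
  moreover have "lc * (var j * x) = lc * (var j * w) + (lc * var j) * (x - w)"
    by (simp add: algebra_simps)
  ultimately show ?thesis by (simp add: reduced_span_mod_add)
qed

lemma sat_add:
  assumes "x \<in> sat" "y \<in> sat"
  shows "x + y \<in> sat"
proof -
  obtain e1 e2 where e: "lc ^ e1 * x \<in> reduced_span_mod" "lc ^ e2 * y \<in> reduced_span_mod"
    using assms unfolding sat_def by blast
  have "lc ^ e2 * (lc ^ e1 * x) + lc ^ e1 * (lc ^ e2 * y) \<in> reduced_span_mod"
    using lc_in_polys_in
    by (intro reduced_span_mod_add reduced_span_mod_mult[OF e(1)] reduced_span_mod_mult[OF e(2)]
        polys_in_power)
  moreover have "lc ^ e2 * (lc ^ e1 * x) + lc ^ e1 * (lc ^ e2 * y) = lc ^ (e1 + e2) * (x + y)"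
    by (simp add: algebra_simps power_add)
  ultimately show ?thesis unfolding sat_def by auto
qed

lemma sat_mult:
  assumes "x \<in> sat" "a \<in> polys_in S"
  shows "a * x \<in> sat"
proof -
  obtain e where "lc ^ e * x \<in> reduced_span_mod"
    using assms(1) unfolding sat_def by blast
  then have "a * (lc ^ e * x) \<in> reduced_span_mod"
    using assms(2) by (rule reduced_span_mod_mult)
  then have "lc ^ e * (a * x) \<in> reduced_span_mod" by (simp add: mult_ac)
  then show ?thesis unfolding sat_def by auto
qed

lemma sat_var_mult:
  assumes x: "x \<in> sat" and i: "i \<in> {1..n}"
  shows "var i * x \<in> sat"
proof (cases "i \<in> S")
  case True
  then show ?thesis using sat_mult[OF x var_in_polys_in[OF True]] by simp
next
  case False
  then have "i \<in> dep" using i by (simp add: dep_def)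
  obtain e where "lc ^ e * x \<in> reduced_span_mod"
    using x unfolding sat_def by blast
  then have "lc * (var i * (lc ^ e * x)) \<in> reduced_span_mod"
    using \<open>i \<in> dep\<close> by (rule reduced_span_mod_var_mult)
  then have "lc ^ Suc e * (var i * x) \<in> reduced_span_mod" by (simp add: mult_ac)
  then show ?thesis unfolding sat_def by (intro CollectI exI[of _ "Suc e"])
qed

lemma one_in_sat: "1 \<in> sat"
proof -
  have "0 \<in> reduced"
    using d_pos by (auto simp: reduced_def dep_def Suc_le_eq)
  then have "monomial 0 \<in> reduced_span_mod"
    by (intro reduced_span_subset_mod monomial_in_reduced_span)
  then have "lc ^ 0 * 1 \<in> reduced_span_mod" by (simp add: monomial_0)
  then show ?thesis unfolding sat_def by blast
qed

lemma sat_sum: "finite A \<Longrightarrow> (\<And>i. i \<in> A \<Longrightarrow> f i \<in> sat) \<Longrightarrow> sum f A \<in> sat"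
proof (induction A rule: finite_induct)
  case empty
  show ?case using sat_mult[OF one_in_sat polys_in_0] by simp
qed (simp add: sat_add)

lemma monomial_mult_in_sat:
  "Poly_Mapping.keys m \<subseteq> {1..n} \<Longrightarrow> x \<in> sat \<Longrightarrow> monomial m * x \<in> sat"
proof (induction m arbitrary: x rule: update_induct)
  case const
  then show ?case by (simp add: monomial_0)
next
  case (update f a b)
  have eq: "Poly_Mapping.update a b f = f + Poly_Mapping.single a b"
    using update.hyps(1)
    by (intro poly_mapping_eqI) (auto simp: lookup_update lookup_add lookup_single when_def in_keys_iff)
  have "a \<in> {1..n}" "Poly_Mapping.keys f \<subseteq> {1..n}"
    using update.prems(1) update.hyps(2) by (auto simp: keys_update)
  moreover have "var a ^ k * x \<in> sat" if "a \<in> {1..n}" for k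
    using that by (induction k) (auto simp: mult.assoc update.prems(2) intro: sat_var_mult)
  ultimately have "monomial f * (var a ^ b * x) \<in> sat"
    by (intro update.IH) auto
  then show ?case by (simp add: eq monomial_add monomial_single mult_ac)
qed

lemma polys_in_ring_subset_sat:
  assumes "p \<in> polys_in {1..n}"
  shows "p \<in> sat"
proof -
  have "Poly_Mapping.single m (Poly_Mapping.lookup p m) \<in> sat" if "m \<in> Poly_Mapping.keys p" for m
  proof -
    have "Poly_Mapping.keys m \<subseteq> {1..n}" using assms that by (auto simp: polys_in_def)
    then have "Poly_Mapping.single 0 (Poly_Mapping.lookup p m) * (monomial m * 1) \<in> sat"
      by (intro sat_mult monomial_mult_in_sat one_in_sat polys_in_const)
    then show ?thesis by (simp add: monomial_def mult_single)
  qed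
  then show ?thesis
    by (subst mpoly_monomial_expansion) (rule sat_sum[OF finite_keys])
qed

lemma powers_mod_Q_in_reduced_span:
  assumes y: "y \<in> polys_in {1..n}"
  obtains B E where "\<And>i m. i \<le> N \<Longrightarrow> m \<in> reduced \<Longrightarrow> B i m \<in> polys_in S"
    "\<And>i. i \<le> N \<Longrightarrow> lc ^ E * y ^ i - (\<Sum>m\<in>reduced. B i m * monomial m) \<in> Q"
proof -
  have "\<forall>i. \<exists>e. lc ^ e * y ^ i \<in> reduced_span_mod"
    using polys_in_ring_subset_sat[OF polys_in_power[OF y]] unfolding sat_def by blast
  then obtain e where e: "\<And>i. lc ^ e i * y ^ i \<in> reduced_span_mod" by metis
  define E where "E = (\<Sum>i\<le>N. e i)"
  have span_mod: "lc ^ E * y ^ i \<in> reduced_span_mod" if "i \<le> N" for i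
  proof -
    have le: "e i \<le> E" unfolding E_def by (rule member_le_sum) (use that in auto)
    have "lc ^ (E - e i) * (lc ^ e i * y ^ i) \<in> reduced_span_mod"
      using lc_in_polys_in by (intro reduced_span_mod_mult[OF e] polys_in_power)
    moreover have "lc ^ (E - e i) * (lc ^ e i * y ^ i) = lc ^ E * y ^ i"
      using le by (simp add: mult.assoc[symmetric] power_add[symmetric])
    ultimately show ?thesis by simp
  qed
  have "\<forall>i\<in>{..N}. \<exists>b. (\<forall>m\<in>reduced. b m \<in> polys_in S) \<and>
      lc ^ E * y ^ i - (\<Sum>m\<in>reduced. b m * monomial m) \<in> Q"
  proof
    fix i assume "i \<in> {..N}"
    then obtain w where w: "w \<in> reduced_span" "lc ^ E * y ^ i - w \<in> Q"
      using span_mod unfolding reduced_span_mod_def by blast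
    then obtain b where "\<forall>m\<in>reduced. b m \<in> polys_in S" "w = (\<Sum>m\<in>reduced. b m * monomial m)"
      unfolding reduced_span_def by blast
    then show "\<exists>b. (\<forall>m\<in>reduced. b m \<in> polys_in S) \<and>
        lc ^ E * y ^ i - (\<Sum>m\<in>reduced. b m * monomial m) \<in> Q"
      using w(2) by blast
  qed
  from bchoice[OF this] obtain B where "\<forall>i\<in>{..N}. (\<forall>m\<in>reduced. B i m \<in> polys_in S) \<and>
      lc ^ E * y ^ i - (\<Sum>m\<in>reduced. B i m * monomial m) \<in> Q"
    by blast
  then show ?thesis
    using that by blast
qed

lemma lc_power_notin: "lc ^ k \<notin> Q"
proof
  assume "lc ^ k \<in> Q"
  moreover have "lc ^ k \<in> polys_in S" using lc_in_polys_in by (rule polys_in_power)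
  ultimately have "lc ^ k = 0" by (rule Q_indep[rotated])
  then show False using lc_nonzero by simp
qed

text \<open>If \<open>y \<in> Q' - Q\<close>, the \<open>N + 1\<close> powers \<open>lc\<^sup>E y\<^sup>i\<close> are congruent modulo \<open>Q\<close> to elements of the
  \<open>\<Bbbk>[x\<^sub>S]\<close>-span of the \<open>N\<close> reduced monomials, hence a nontrivial \<open>\<Bbbk>[x\<^sub>S]\<close>-combination
  \<open>\<Sum>\<^sub>i \<lambda>\<^sub>i y\<^sup>i\<close> lies in \<open>Q\<close>; all \<open>\<lambda>\<^sub>i\<close> then lie in \<open>Q' \<inter> \<Bbbk>[x\<^sub>S] = 0\<close>.\<close>

lemma prime_superset_subset:
  assumes Q': "primeideal Q' (poly_ring n)" and "Q \<subseteq> Q'" and indep': "indep_vars n Q' S"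
  shows "Q' \<subseteq> Q"
proof
  fix y assume "y \<in> Q'"
  show "y \<in> Q"
  proof (rule ccontr)
    assume "y \<notin> Q"
    have y: "y \<in> polys_in {1..n}"
      using poly_ideal_subset[OF poly_prime_ideal[OF Q']] \<open>y \<in> Q'\<close> by blast
    define N where "N = card reduced"
    obtain B E where B: "\<And>i m. i \<le> N \<Longrightarrow> m \<in> reduced \<Longrightarrow> B i m \<in> polys_in S"
      "\<And>i. i \<le> N \<Longrightarrow> lc ^ E * y ^ i - (\<Sum>m\<in>reduced. B i m * monomial m) \<in> Q"
      by (rule powers_mod_Q_in_reduced_span[OF y, of N]) (rule that)
    have "\<exists>lam. (\<forall>t\<in>{..N}. lam t \<in> polys_in S) \<and> (\<exists>t\<in>{..N}. lam t \<noteq> 0) \<and>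
        (\<forall>m\<in>reduced. (\<Sum>t\<in>{..N}. lam t * B t m) = 0)"
      using B(1) finite_reduced
      by (intro homogeneous_system_nontrivial_solution[where B = "polys_in S"]) (auto simp: N_def)
    then obtain lam where lam: "\<forall>t\<in>{..N}. lam t \<in> polys_in S" "\<exists>t\<in>{..N}. lam t \<noteq> 0"
      "\<forall>m\<in>reduced. (\<Sum>t\<in>{..N}. lam t * B t m) = 0" by blast
    have "(\<Sum>i\<le>N. lam i * (lc ^ E * y ^ i - (\<Sum>m\<in>reduced. B i m * monomial m))) \<in> Q"
      using B(2) lam(1) S_polys_in_ring
      by (intro poly_ideal_sum[OF Q_ideal] poly_ideal_mult_left[OF Q_ideal]) auto
    then have "lc ^ E * (\<Sum>i\<le>N. lam i * y ^ i) \<in> Q"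
      by (simp only: sum_linear_relation_cancel[OF lam(3)])
    moreover have "(\<Sum>i\<le>N. lam i * y ^ i) \<in> polys_in {1..n}"
      using lam(1) y S_polys_in_ring by (auto intro!: polys_in_sum)
    moreover have "lc ^ E \<in> polys_in {1..n}"
      using lc_in_polys_in by (intro S_polys_in_ring polys_in_power)
    ultimately have "(\<Sum>i\<le>N. lam i * y ^ i) \<in> Q"
      using poly_prime_mult_imp[OF Q] lc_power_notin by metis
    then have "\<forall>i\<le>N. lam i \<in> Q'"
      using lam(1) indep' Q_indep \<open>y \<in> Q'\<close> \<open>y \<notin> Q\<close> y poly_ideal_0[OF Q_ideal] S_polys_in_ring
      by (intro coeffs_in_ideal_if_power_sum_in_prime[OF Q poly_prime_ideal[OF Q'] \<open>Q \<subseteq> Q'\<close>])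
        (auto simp: indep_vars_def)
    then have "\<forall>i\<le>N. lam i = 0"
      using lam(1) indep' by (auto simp: indep_vars_def)
    then show False using lam(2) by auto
  qed
qed

end

lemma prime_subset_if_indep_maximal:
  fixes Q Q' :: "'a::field mpoly set"
  assumes Q: "primeideal Q (poly_ring n)" and Q': "primeideal Q' (poly_ring n)" and "Q \<subseteq> Q'"
    and indep': "indep_vars n Q' S" and maximal: "\<forall>j\<in>{1..n} - S. \<not> indep_vars n Q (insert j S)"
  shows "Q' \<subseteq> Q"
proof -
  have indep: "indep_vars n Q S"
    using indep' \<open>Q \<subseteq> Q'\<close> by (auto simp: indep_vars_def)
  define rel where "rel j = (\<lambda>(d, c, h). d \<ge> 1 \<and> c \<in> polys_in S \<and> c \<noteq> 0 \<and>
      (\<forall>i. h i \<in> polys_in S) \<and> c * var j ^ d + (\<Sum>i<d. h i * var j ^ i) \<in> Q)" for j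
  have "\<exists>t. rel j t" if "j \<in> {1..n} - S" for j
    by (rule dependent_var_relation[OF indep, of j]) (use that maximal in \<open>auto simp: rel_def\<close>)
  then obtain t where t: "\<And>j. j \<in> {1..n} - S \<Longrightarrow> rel j (t j)"
    by metis
  interpret var_relations n Q S "\<lambda>j. fst (t j)" "\<lambda>j. fst (snd (t j))" "\<lambda>j. snd (snd (t j))"
    using t by (intro var_relations.intro[OF Q indep]) (auto simp: rel_def case_prod_beta)
  show ?thesis
    by (rule prime_superset_subset[OF Q' \<open>Q \<subseteq> Q'\<close> indep'])
qed

text \<open>For a prime \<open>Q\<close> this is the dimension of \<open>\<Bbbk>[x\<^sub>1, \<dots>, x\<^sub>n] / Q\<close>; only its strict decrease along
  strict inclusions of primes is used.\<close>

definition indep_dim :: "nat \<Rightarrow> 'a::field mpoly set \<Rightarrow> nat" where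
  "indep_dim n Q = Max (card ` {S. indep_vars n Q S})"

lemma polys_in_empty: "p \<in> polys_in {} \<Longrightarrow> p = Poly_Mapping.single 0 (Poly_Mapping.lookup p 0)"
  by (intro poly_mapping_eqI) (auto simp: polys_in_def lookup_single when_def in_keys_iff)

lemma indep_vars_empty:
  fixes Q :: "'a::field mpoly set"
  assumes Q: "primeideal Q (poly_ring n)"
  shows "indep_vars n Q {}"
proof -
  have "p = 0" if p: "p \<in> polys_in {}" "p \<in> Q" for p :: "'a mpoly"
  proof (rule ccontr)
    assume "p \<noteq> 0"
    then have a: "Poly_Mapping.lookup p 0 \<noteq> 0"
      using polys_in_empty[OF p(1)] by (metis single_zero)
    have "Poly_Mapping.single 0 (inverse (Poly_Mapping.lookup p 0)) * p \<in> Q"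
      by (rule poly_ideal_mult_left[OF poly_prime_ideal[OF Q] p(2) polys_in_const])
    moreover have "Poly_Mapping.single 0 (inverse (Poly_Mapping.lookup p 0)) * p = 1"
      using a by (subst polys_in_empty[OF p(1)]) (simp add: mult_single)
    ultimately show False using poly_prime_one_notin[OF Q] by simp
  qed
  then show ?thesis by (auto simp: indep_vars_def)
qed

lemma finite_card_indep_vars: "finite (card ` {S. indep_vars n Q S})"
proof -
  have "{S. indep_vars n Q S} \<subseteq> Pow {1..n}" by (auto simp: indep_vars_def)
  then show ?thesis by (meson finite_Pow_iff finite_atLeastAtMost finite_imageI finite_subset)
qed

lemma card_le_indep_dim: "indep_vars n Q S \<Longrightarrow> card S \<le> indep_dim n Q"
  unfolding indep_dim_def using finite_card_indep_vars by (intro Max_ge) auto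

lemma indep_dim_attained:
  assumes "primeideal Q (poly_ring n)"
  obtains S where "indep_vars n Q S" "card S = indep_dim n Q"
proof -
  have "card ` {S. indep_vars n Q S} \<noteq> {}" using indep_vars_empty[OF assms] by blast
  then have "indep_dim n Q \<in> card ` {S. indep_vars n Q S}"
    unfolding indep_dim_def using finite_card_indep_vars by (rule Max_in[rotated])
  then obtain S where "indep_vars n Q S" "indep_dim n Q = card S" by blast
  then show ?thesis using that[of S] by simp
qed

lemma indep_dim_le:
  assumes "primeideal Q (poly_ring n)"
  shows "indep_dim n Q \<le> n"
proof -
  obtain S where S: "indep_vars n Q S" "card S = indep_dim n Q"
    using indep_dim_attained[OF assms] .
  then have "card S \<le> card {1..n}"
    by (intro card_mono) (auto simp: indep_vars_def)
  then show ?thesis using S(2) by simp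
qed

text \<open>A largest independent set of \<open>Q'\<close> that stayed maximal for \<open>Q\<close> would give \<open>Q' \<subseteq> Q\<close>.\<close>

lemma indep_dim_psubset:
  fixes Q Q' :: "'a::field mpoly set"
  assumes Q: "primeideal Q (poly_ring n)" and Q': "primeideal Q' (poly_ring n)" and "Q \<subset> Q'"
  shows "indep_dim n Q' < indep_dim n Q"
proof (rule ccontr)
  assume "\<not> indep_dim n Q' < indep_dim n Q"
  obtain S where S: "indep_vars n Q' S" "card S = indep_dim n Q'"
    using indep_dim_attained[OF Q'] .
  have "finite S" using S(1) by (auto simp: indep_vars_def intro: finite_subset)
  have "\<forall>j\<in>{1..n} - S. \<not> indep_vars n Q (insert j S)"
  proof (intro ballI notI)
    fix j assume "j \<in> {1..n} - S" "indep_vars n Q (insert j S)"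
    then have "card (insert j S) \<le> indep_dim n Q"
      by (intro card_le_indep_dim)
    then have "Suc (card S) \<le> indep_dim n Q"
      using \<open>finite S\<close> \<open>j \<in> {1..n} - S\<close> by simp
    then show False using \<open>\<not> indep_dim n Q' < indep_dim n Q\<close> S(2) by simp
  qed
  then have "Q' \<subseteq> Q"
    using prime_subset_if_indep_maximal[OF Q Q' _ S(1)] \<open>Q \<subset> Q'\<close> by blast
  then show False using \<open>Q \<subset> Q'\<close> by blast
qed

lemma indep_dim_var_ideal:
  assumes "C \<subseteq> {1..n}"
  shows "n - card C \<le> indep_dim n (var_ideal n C :: 'a::field mpoly set)"
proof -
  have "indep_vars n (var_ideal n C :: 'a mpoly set) ({1..n} - C)"
    unfolding indep_vars_def using var_ideal_inter_polys_in by blast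
  then have "card ({1..n} - C) \<le> indep_dim n (var_ideal n C :: 'a mpoly set)"
    by (rule card_le_indep_dim)
  moreover have "card ({1..n} - C) = n - card C"
    using assms by (subst card_Diff_subset) (auto intro: finite_subset)
  ultimately show ?thesis by simp
qed

lemma height_var_ideal_le:
  assumes C: "C \<subseteq> {1..n}"
  shows "height (poly_ring n :: 'a::field mpoly ring) (var_ideal n C) \<le> enat (card C)"
  unfolding height_def
proof (rule SUP_least)
  fix k assume "k \<in> {k. \<exists>Q. (\<forall>i\<le>k. primeideal (Q i) (poly_ring n :: 'a mpoly ring)) \<and>
      (\<forall>i<k. Q i \<subset> Q (Suc i)) \<and> Q k = var_ideal n C}"
  then obtain Q :: "nat \<Rightarrow> 'a mpoly set" where Q: "\<forall>i\<le>k. primeideal (Q i) (poly_ring n)"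
    "\<forall>i<k. Q i \<subset> Q (Suc i)" "Q k = var_ideal n C"
    by blast
  have "indep_dim n (Q k) + i \<le> indep_dim n (Q (k - i))" if "i \<le> k" for i
    using that
  proof (induction i)
    case (Suc i)
    then have "indep_dim n (Q (Suc (k - Suc i))) < indep_dim n (Q (k - Suc i))"
      using Q(1,2) by (intro indep_dim_psubset) auto
    moreover have "Suc (k - Suc i) = k - i" using Suc.prems by simp
    ultimately show ?case using Suc by simp
  qed simp
  from this[of k] have "indep_dim n (Q k) + k \<le> indep_dim n (Q 0)" by simp
  also have "\<dots> \<le> n" using Q(1) by (intro indep_dim_le) simp
  finally have "indep_dim n (Q k) + k \<le> n" .
  moreover have "n - card C \<le> indep_dim n (Q k)"
    using indep_dim_var_ideal[OF C] Q(3) by simp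
  moreover have "card C \<le> n"
    using card_mono[OF _ C] by simp
  ultimately show "enat k \<le> enat (card C)" by simp
qed

lemma height_var_ideal_ge:
  assumes C: "C \<subseteq> {1..n}"
  shows "enat (card C) \<le> height (poly_ring n :: 'a::field mpoly ring) (var_ideal n C)"
  unfolding height_def
proof (rule SUP_upper)
  define xs where "xs = sorted_list_of_set C"
  have xs: "distinct xs" "set xs = C" "length xs = card C"
    using finite_subset[OF C] by (simp_all add: xs_def)
  define Q where "Q i = (var_ideal n (set (take i xs)) :: 'a mpoly set)" for i
  have "Q i \<subset> Q (Suc i)" if "i < card C" for i
  proof -
    have "take (Suc i) xs = take i xs @ [xs ! i]"
      using that xs(3) by (simp add: take_Suc_conv_app_nth)
    moreover have "distinct (take (Suc i) xs)" using xs(1) by simp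
    ultimately have "set (take i xs) \<subset> set (take (Suc i) xs)" by auto
    moreover have "set (take (Suc i) xs) \<subseteq> {1..n}"
      using set_take_subset[of "Suc i" xs] C xs(2) by blast
    ultimately show ?thesis unfolding Q_def by (rule var_ideal_psubset)
  qed
  moreover have "Q (card C) = var_ideal n C" using xs by (simp add: Q_def)
  ultimately show "card C \<in> {k. \<exists>Q. (\<forall>i\<le>k. primeideal (Q i) (poly_ring n :: 'a mpoly ring)) \<and>
      (\<forall>i<k. Q i \<subset> Q (Suc i)) \<and> Q k = var_ideal n C}"
    by (intro CollectI exI[of _ Q]) (simp add: Q_def var_ideal_prime)
qed

lemma height_var_ideal:
  "C \<subseteq> {1..n} \<Longrightarrow> height (poly_ring n :: 'a::field mpoly ring) (var_ideal n C) = enat (card C)"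
  using height_var_ideal_le height_var_ideal_ge by (metis order_antisym)

section \<open>Minimal primes of edge ideals\<close>

definition vertex_cover :: "nat \<Rightarrow> nat set set \<Rightarrow> nat set \<Rightarrow> bool" where
  "vertex_cover n E C \<longleftrightarrow> C \<subseteq> {1..n} \<and> (\<forall>i j. {i, j} \<in> E \<longrightarrow> i \<in> C \<or> j \<in> C)"

definition min_vertex_cover :: "nat \<Rightarrow> nat set set \<Rightarrow> nat set \<Rightarrow> bool" where
  "min_vertex_cover n E C \<longleftrightarrow> vertex_cover n E C \<and> (\<forall>D. D \<subset> C \<longrightarrow> \<not> vertex_cover n E D)"

context
  fixes n :: nat and E :: "nat set set"
  assumes E: "\<forall>e\<in>E. e \<subseteq> {1..n}"
begin

lemma edge_var_mult_in_poly_ring: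
  "{i, j} \<in> E \<Longrightarrow> (var i * var j :: 'a::field mpoly) \<in> polys_in {1..n}"
  using E by (auto intro!: polys_in_mult var_in_polys_in)

lemma edge_var_mult_in_edge_ideal:
  assumes "{i, j} \<in> E"
  shows "(var i * var j :: 'a::field mpoly) \<in> edge_ideal n E"
proof -
  interpret cring "poly_ring n :: 'a mpoly ring" by (rule cring_poly_ring)
  have "{var i * var j | i j. {i, j} \<in> E} \<subseteq> carrier (poly_ring n :: 'a mpoly ring)"
    using edge_var_mult_in_poly_ring by (auto simp: carrier_poly_ring)
  then show ?thesis
    using genideal_self assms unfolding edge_ideal_def by blast
qed

lemma edge_ideal_subset:
  fixes J :: "'a::field mpoly set"
  assumes "ideal J (poly_ring n)" "\<And>i j. {i, j} \<in> E \<Longrightarrow> var i * var j \<in> J"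
  shows "edge_ideal n E \<subseteq> J"
proof -
  interpret cring "poly_ring n :: 'a mpoly ring" by (rule cring_poly_ring)
  show ?thesis
    unfolding edge_ideal_def using assms by (intro genideal_minimal) auto
qed

lemma vertex_cover_of_prime:
  fixes P :: "'a::field mpoly set"
  assumes P: "primeideal P (poly_ring n)" and "edge_ideal n E \<subseteq> P"
  shows "vertex_cover n E {i \<in> {1..n}. var i \<in> P}"
  unfolding vertex_cover_def
proof (intro conjI allI impI)
  fix i j assume e: "{i, j} \<in> E"
  then have "i \<in> {1..n}" "j \<in> {1..n}" using E by auto
  moreover have "(var i * var j :: 'a mpoly) \<in> P"
    using edge_var_mult_in_edge_ideal[OF e] assms(2) by blast
  ultimately show "i \<in> {i \<in> {1..n}. var i \<in> P} \<or> j \<in> {i \<in> {1..n}. var i \<in> P}"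
    using poly_prime_mult_imp[OF P] var_in_polys_in by blast
qed auto

lemma edge_ideal_subset_var_ideal:
  assumes "vertex_cover n E C"
  shows "edge_ideal n E \<subseteq> (var_ideal n C :: 'a::field mpoly set)"
proof (rule edge_ideal_subset[OF var_ideal_ideal])
  fix i j assume e: "{i, j} \<in> E"
  have "Poly_Mapping.keys (var i * var j :: 'a mpoly) = {Poly_Mapping.single i 1 + Poly_Mapping.single j 1}"
    by (simp add: var_def mult_single)
  moreover have "i \<in> C \<or> j \<in> C" using assms e by (simp add: vertex_cover_def)
  ultimately show "(var i * var j :: 'a mpoly) \<in> var_ideal n C"
    using edge_var_mult_in_poly_ring[OF e] by (auto simp: var_ideal_def keys_add_nat)
qed

lemma min_vertex_cover_outside_neighbour:
  assumes "min_vertex_cover n E C" "v \<in> C" and loop_free: "\<And>i. {i} \<notin> E"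
  obtains u where "u \<in> {1..n} - C" "{u, v} \<in> E"
proof -
  have cover: "vertex_cover n E C" and "\<not> vertex_cover n E (C - {v})"
    using assms by (auto simp: min_vertex_cover_def)
  then obtain i j where ij: "{i, j} \<in> E" "i \<notin> C - {v}" "j \<notin> C - {v}"
    by (auto simp: vertex_cover_def)
  then have "i \<in> C \<or> j \<in> C" using cover by (simp add: vertex_cover_def)
  moreover have "i \<in> {1..n}" "j \<in> {1..n}" using ij(1) E by auto
  ultimately show ?thesis
  proof (elim disjE)
    assume "i \<in> C"
    then have "i = v" "j \<in> {1..n} - C" using ij \<open>j \<in> {1..n}\<close> loop_free by auto
    then show ?thesis using that[of j] ij(1) by (simp add: insert_commute)
  next
    assume "j \<in> C"
    then have "j = v" "i \<in> {1..n} - C" using ij \<open>i \<in> {1..n}\<close> loop_free by auto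
    then show ?thesis using that[of i] ij(1) by simp
  qed
qed

lemma min_vertex_cover_compl:
  assumes "U \<subseteq> {1..n}" and indep: "\<And>i j. {i, j} \<in> E \<Longrightarrow> \<not> (i \<in> U \<and> j \<in> U)"
    and dominating: "\<And>v. v \<in> {1..n} - U \<Longrightarrow> \<exists>u\<in>U. {u, v} \<in> E"
  shows "min_vertex_cover n E ({1..n} - U)"
  unfolding min_vertex_cover_def
proof (intro conjI allI impI notI)
  show cover: "vertex_cover n E ({1..n} - U)"
    using E indep by (fastforce simp: vertex_cover_def)
  fix D assume "D \<subset> {1..n} - U" "vertex_cover n E D"
  then obtain v where "v \<in> {1..n} - U" "v \<notin> D" by blast
  moreover obtain u where "u \<in> U" "{u, v} \<in> E" using dominating[OF \<open>v \<in> {1..n} - U\<close>] by blast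
  ultimately show False
    using \<open>D \<subset> {1..n} - U\<close> \<open>vertex_cover n E D\<close> by (auto simp: vertex_cover_def)
qed

text \<open>A prime \<open>P \<supseteq> I(G)\<close> contains \<open>var_ideal n C\<close> for the cover \<open>C\<close> of variables lying in \<open>P\<close>, and
  \<open>var_ideal n C\<close> is itself a prime containing \<open>I(G)\<close>; so minimal primes and minimal
  vertex covers correspond.\<close>

lemma var_ideal_cover_of_prime_subset:
  fixes P :: "'a::field mpoly set"
  assumes "primeideal P (poly_ring n)"
  shows "var_ideal n {i \<in> {1..n}. var i \<in> P} \<subseteq> P"
  by (rule var_ideal_subset[OF poly_prime_ideal[OF assms]]) auto

lemma minimal_primes_edge_ideal_subset:
  "minimal_primes (poly_ring n) (edge_ideal n E :: 'a::field mpoly set) \<subseteq>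
     var_ideal n ` {C. min_vertex_cover n E C}"
proof
  fix P :: "'a mpoly set" assume "P \<in> minimal_primes (poly_ring n) (edge_ideal n E)"
  then have P: "primeideal P (poly_ring n)" "edge_ideal n E \<subseteq> P"
    and min: "\<And>Q. primeideal Q (poly_ring n) \<Longrightarrow> edge_ideal n E \<subseteq> Q \<Longrightarrow> Q \<subseteq> P \<Longrightarrow> Q = P"
    by (auto simp: minimal_primes_def)
  define C where "C = {i \<in> {1..n}. var i \<in> P}"
  have cover: "vertex_cover n E C" unfolding C_def by (rule vertex_cover_of_prime[OF P])
  have eq: "var_ideal n C = P"
    using min[OF var_ideal_prime edge_ideal_subset_var_ideal[OF cover]]
      var_ideal_cover_of_prime_subset[OF P(1)] by (simp add: C_def)
  have "\<not> vertex_cover n E D" if "D \<subset> C" for D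
  proof
    assume "vertex_cover n E D"
    moreover have "var_ideal n D \<subset> (var_ideal n C :: 'a mpoly set)"
      using that by (intro var_ideal_psubset) (auto simp: C_def)
    ultimately show False
      using min[OF var_ideal_prime edge_ideal_subset_var_ideal] eq by blast
  qed
  then show "P \<in> var_ideal n ` {C. min_vertex_cover n E C}"
    using cover eq by (auto simp: min_vertex_cover_def)
qed

lemma var_ideal_in_minimal_primes:
  assumes C: "min_vertex_cover n E C"
  shows "(var_ideal n C :: 'a::field mpoly set) \<in> minimal_primes (poly_ring n) (edge_ideal n E)"
proof -
  have cover: "vertex_cover n E C"
    using C by (simp add: min_vertex_cover_def)
  have "Q = var_ideal n C"
    if Q: "primeideal Q (poly_ring n)" "edge_ideal n E \<subseteq> Q" "Q \<subseteq> var_ideal n C" for Q :: "'a mpoly set"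
  proof -
    define C' where "C' = {i \<in> {1..n}. var i \<in> Q}"
    have "C' \<subseteq> C"
      using Q(3) var_in_var_ideal_iff by (auto simp: C'_def)
    then have "C' = C"
      using C vertex_cover_of_prime[OF Q(1,2)] by (auto simp: min_vertex_cover_def C'_def)
    then show ?thesis
      using var_ideal_cover_of_prime_subset[OF Q(1)] Q(3) by (auto simp: C'_def)
  qed
  then show ?thesis
    using var_ideal_prime edge_ideal_subset_var_ideal[OF cover] by (auto simp: minimal_primes_def)
qed

lemma minimal_primes_edge_ideal:
  "minimal_primes (poly_ring n) (edge_ideal n E :: 'a::field mpoly set) =
     var_ideal n ` {C. min_vertex_cover n E C}"
  using minimal_primes_edge_ideal_subset var_ideal_in_minimal_primes by blast

lemma big_height_edge_ideal:
  "big_height (poly_ring n :: 'a::field mpoly ring) (edge_ideal n E) =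
     (SUP C\<in>{C. min_vertex_cover n E C}. enat (card C))"
proof -
  have "height (poly_ring n :: 'a mpoly ring) (var_ideal n C) = enat (card C)"
    if "min_vertex_cover n E C" for C
    using that by (intro height_var_ideal) (auto simp: min_vertex_cover_def vertex_cover_def)
  then show ?thesis
    unfolding big_height_def minimal_primes_edge_ideal image_image by (intro SUP_cong) auto
qed

end

section \<open>Minimal vertex covers of \<open>L\<^sub>n\<^sup>2\<close>\<close>

lemma L2_edges_iff:
  "{i, j} \<in> L2_edges n \<longleftrightarrow> i \<in> {1..n} \<and> j \<in> {1..n} \<and> (j = i + 1 \<or> j = i + 2 \<or> i = j + 1 \<or> i = j + 2)"
proof
  assume "{i, j} \<in> L2_edges n"
  then obtain a where "({i, j} = {a, a + 1} \<and> 1 \<le> a \<and> a \<le> n - 1) \<or> ({i, j} = {a, a + 2} \<and> 1 \<le> a \<and> a + 2 \<le> n)"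
    unfolding L2_edges_def by blast
  then show "i \<in> {1..n} \<and> j \<in> {1..n} \<and> (j = i + 1 \<or> j = i + 2 \<or> i = j + 1 \<or> i = j + 2)"
    by (auto simp: doubleton_eq_iff)
next
  assume "i \<in> {1..n} \<and> j \<in> {1..n} \<and> (j = i + 1 \<or> j = i + 2 \<or> i = j + 1 \<or> i = j + 2)"
  then consider "i \<in> {1..n}" "j = i + 1 \<or> j = i + 2" "j \<le> n" | "j \<in> {1..n}" "i = j + 1 \<or> i = j + 2" "i \<le> n"
    by auto
  then show "{i, j} \<in> L2_edges n"
  proof cases
    case 1
    then show ?thesis unfolding L2_edges_def by auto
  next
    case 2
    then have "{i, j} = {j, i}" by auto
    with 2 show ?thesis unfolding L2_edges_def by auto
  qed
qed

lemma L2_edges_subset: "\<forall>e\<in>L2_edges n. e \<subseteq> {1..n}"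
  by (auto simp: L2_edges_def)

lemma L2_edges_loop_free: "{i} \<notin> L2_edges n"
  using L2_edges_iff[of i i n] by simp

lemma card_min_vertex_cover_L2:
  assumes "min_vertex_cover n (L2_edges n) C"
  shows "card C + (n + 4) div 5 \<le> n"
proof -
  have C: "C \<subseteq> {1..n}" using assms by (simp add: min_vertex_cover_def vertex_cover_def)
  define U where "U = {1..n} - C"
  have "v \<in> (\<Union>u\<in>U. {u - 2..u + 2})" if "v \<in> {1..n}" for v
  proof (cases "v \<in> C")
    case True
    then obtain u where "u \<in> U" "{u, v} \<in> L2_edges n"
      using min_vertex_cover_outside_neighbour[OF L2_edges_subset assms _ L2_edges_loop_free] unfolding U_def by blast
    then have "v \<in> {u - 2..u + 2}" by (auto simp: L2_edges_iff)
    then show ?thesis using \<open>u \<in> U\<close> by blast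
  next
    case False
    then have "v \<in> U" "v \<in> {v - 2..v + 2}" using that by (auto simp: U_def)
    then show ?thesis by blast
  qed
  then have "card {1..n} \<le> card (\<Union>u\<in>U. {u - 2..u + 2})"
    by (intro card_mono) (auto simp: U_def)
  also have "\<dots> \<le> (\<Sum>u\<in>U. card {u - 2..u + 2})"
    by (rule card_UN_le) (simp add: U_def)
  also have "\<dots> \<le> (\<Sum>u\<in>U. 5)"
    by (intro sum_mono) simp
  also have "\<dots> = 5 * card U" by simp
  finally have "n \<le> 5 * card U" by simp
  moreover have "card U = n - card C"
    unfolding U_def using C by (subst card_Diff_subset) (auto intro: finite_subset)
  moreover have "card C \<le> n" using card_mono[OF _ C] by simp
  ultimately show ?thesis by linarith
qed

definition L2_indep :: "nat \<Rightarrow> nat set" where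
  "L2_indep n = {i \<in> {1..n}. i mod 5 = 3 \<or> (i = n \<and> (n mod 5 = 1 \<or> n mod 5 = 2))}"

lemma mod_5_eq_3I:
  fixes v :: nat
  shows "Suc v mod 5 = 4 \<Longrightarrow> v mod 5 = 3" "Suc (Suc v) mod 5 = 0 \<Longrightarrow> v mod 5 = 3"
    "v mod 5 = 2 \<Longrightarrow> Suc v mod 5 = 3" "v mod 5 = 1 \<Longrightarrow> Suc (Suc v) mod 5 = 3"
  by (simp_all add: mod_Suc split: if_splits)

lemma L2_indep_no_edge:
  assumes "{i, j} \<in> L2_edges n"
  shows "\<not> (i \<in> L2_indep n \<and> j \<in> L2_indep n)"
proof
  assume "i \<in> L2_indep n \<and> j \<in> L2_indep n"
  then have "i mod 5 = 3 \<or> (i = n \<and> (n mod 5 = 1 \<or> n mod 5 = 2))"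
    "j mod 5 = 3 \<or> (j = n \<and> (n mod 5 = 1 \<or> n mod 5 = 2))" "i \<le> n" "j \<le> n"
    by (auto simp: L2_indep_def)
  moreover have "j = i + 1 \<or> j = i + 2 \<or> i = j + 1 \<or> i = j + 2"
    using assms by (simp add: L2_edges_iff)
  ultimately show False by (elim disjE conjE) (simp_all add: mod_Suc)
qed

lemma L2_indep_dominating:
  assumes "v \<in> {1..n} - L2_indep n"
  shows "\<exists>u\<in>L2_indep n. {u, v} \<in> L2_edges n"
proof -
  have v: "1 \<le> v" "v \<le> n" "v mod 5 \<noteq> 3" "\<not> (v = n \<and> (n mod 5 = 1 \<or> n mod 5 = 2))"
    using assms by (auto simp: L2_indep_def)
  have witness: "\<exists>u\<in>L2_indep n. {u, v} \<in> L2_edges n"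
    if "1 \<le> u" "u \<le> n" "u mod 5 = 3 \<or> (u = n \<and> (n mod 5 = 1 \<or> n mod 5 = 2))"
      "u = v + 1 \<or> u = v + 2 \<or> v = u + 1 \<or> v = u + 2" for u
    using that v(1,2) by (auto simp: L2_indep_def L2_edges_iff)
  have "v mod 5 < 5" by simp
  then consider "v mod 5 = 0" | "v mod 5 = 1" | "v mod 5 = 2" | "v mod 5 = 4"
    using v(3) by linarith
  then show ?thesis
  proof cases
    case 1
    have "v \<noteq> 1 \<and> v \<noteq> 2" using 1 by auto
    then have "Suc (Suc (v - 2)) = v" "3 \<le> v" using v(1) by auto
    then have "(v - 2) mod 5 = 3" using 1 mod_5_eq_3I(2)[of "v - 2"] by simp
    then show ?thesis using v \<open>3 \<le> v\<close> by (intro witness[of "v - 2"]) auto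
  next
    case 2
    show ?thesis
    proof (cases "v + 2 \<le> n")
      case True
      then show ?thesis using 2 v mod_5_eq_3I(4)[of v] by (intro witness[of "v + 2"]) auto
    next
      case False
      moreover have "v \<noteq> n" using v(4) 2 by auto
      ultimately have "n = Suc v" using v(2) by linarith
      then have "n mod 5 = 2" using 2 by (simp add: mod_Suc)
      then show ?thesis using \<open>n = Suc v\<close> by (intro witness[of n]) auto
    qed
  next
    case 3
    then have "v + 1 \<le> n" using v by (cases "v = n") auto
    then show ?thesis using 3 mod_5_eq_3I(3)[of v] by (intro witness[of "v + 1"]) auto
  next
    case 4
    have "v \<noteq> 1" using 4 by auto
    then have "Suc (v - 1) = v" "2 \<le> v" using v(1) by auto
    then have "(v - 1) mod 5 = 3" using 4 mod_5_eq_3I(1)[of "v - 1"] by simp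
    then show ?thesis using v \<open>2 \<le> v\<close> by (intro witness[of "v - 1"]) auto
  qed
qed

lemma card_L2_indep: "card (L2_indep n) \<le> (n + 4) div 5"
proof -
  have *: "i \<le> n" "i mod 5 = 3 \<or> (i = n \<and> (n mod 5 = 1 \<or> n mod 5 = 2))" if "i \<in> L2_indep n" for i
    using that by (auto simp: L2_indep_def)
  have "inj_on (\<lambda>i. i div 5) (L2_indep n)"
  proof (rule inj_onI)
    fix i j assume i: "i \<in> L2_indep n" and j: "j \<in> L2_indep n" and eq: "i div 5 = j div 5"
    show "i = j"
      by (insert eq *[OF i] *[OF j] div_mod_decomp[of i 5] div_mod_decomp[of j 5] div_mod_decomp[of n 5])
        (elim disjE conjE; (hypsubst_thin)?; linarith)
  qed
  moreover have "i div 5 < (n + 4) div 5" if "i \<in> L2_indep n" for i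
    by (insert *[OF that] div_mod_decomp[of i 5] div_mod_decomp[of n 5] div_mod_decomp[of "n + 4" 5]
        mod_less_divisor[of 5 "n + 4"]) (elim disjE conjE; (hypsubst_thin)?; linarith)
  then have "(\<lambda>i. i div 5) ` L2_indep n \<subseteq> {..<(n + 4) div 5}" by auto
  ultimately show ?thesis
    using card_inj_on_le[of "\<lambda>i. i div 5" "L2_indep n" "{..<(n + 4) div 5}"] by simp
qed

lemma exists_large_min_vertex_cover_L2:
  "\<exists>C. min_vertex_cover n (L2_edges n) C \<and> n \<le> card C + (n + 4) div 5"
proof -
  have U: "L2_indep n \<subseteq> {1..n}" by (auto simp: L2_indep_def)
  have "min_vertex_cover n (L2_edges n) ({1..n} - L2_indep n)"
    using L2_indep_no_edge L2_indep_dominating by (intro min_vertex_cover_compl[OF L2_edges_subset U])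
  moreover have "card ({1..n} - L2_indep n) = n - card (L2_indep n)"
    using U by (subst card_Diff_subset) (auto intro: finite_subset)
  moreover have "card (L2_indep n) \<le> n"
    using card_mono[OF _ U] by simp
  ultimately show ?thesis
    using card_L2_indep[of n] by (intro exI[of _ "{1..n} - L2_indep n"]) auto
qed

lemma nat_ceiling_divide_5: "nat \<lceil>real n / 5\<rceil> = (n + 4) div 5"
proof -
  have "real ((n + 4) div 5) - 1 < real n / 5" "real n / 5 \<le> real ((n + 4) div 5)"
    by linarith+
  then have "\<lceil>real n / 5\<rceil> = int ((n + 4) div 5)" by (intro ceiling_unique) auto
  then show ?thesis by simp
qed

lemma max_card_min_vertex_cover_L2:
  "(SUP C\<in>{C. min_vertex_cover n (L2_edges n) C}. enat (card C)) = enat (n - (n + 4) div 5)"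
proof (rule antisym)
  show "(SUP C\<in>{C. min_vertex_cover n (L2_edges n) C}. enat (card C)) \<le> enat (n - (n + 4) div 5)"
    using card_min_vertex_cover_L2 by (intro SUP_least) force
  obtain C where "min_vertex_cover n (L2_edges n) C" "n \<le> card C + (n + 4) div 5"
    using exists_large_min_vertex_cover_L2 by blast
  then show "enat (n - (n + 4) div 5) \<le> (SUP C\<in>{C. min_vertex_cover n (L2_edges n) C}. enat (card C))"
    by (intro SUP_upper2[of C]) auto
qed

theorem corollary4p5:
  fixes n :: nat
  assumes "n \<ge> 3"
  shows "big_height (poly_ring n :: ('a::field) mpoly ring) (edge_ideal n (L2_edges n))
           = enat (n - nat \<lceil>real n / 5\<rceil>)"
  by (simp add: big_height_edge_ideal[OF L2_edges_subset] max_card_min_vertex_cover_L2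
      nat_ceiling_divide_5)

end
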